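(* Fix $0<\eta<\omega_1$, let $\mathcal{F}_1,\mathcal{F}_2,\dots$ be regular families each containing all singletons with $CB(\mathcal{F}_n)<\omega^\eta$ for all $n$, and let $(\varpi_n)_{n=1}^\infty\subset(0,1]$ converge to $0$. For $x\in c_{00}$ and $n\in\mathbb{N}$ let $$|x|_n=\sup\Bigl\{\sum_{i=1}^t\|I_ix\|_{\ell_2}: t\in\mathbb{N},\ I_1<\dots<I_t,\ (\min I_i)_{i=1}^t\in\mathcal{F}_n\Bigr\},$$ where the $I_i$ are nonempty finite subsets of $\mathbb{N}$, and let $[x]=\sup_n\varpi_n|x|_n$. Let $Z$ be the completion of $c_{00}$ with respect to $[\cdot]$. Then the canonical basis of $Z$ is $\eta$-weakly null.
   Context: $E<F$ for $E,F\subset\mathbb{N}$ means $E=\varnothing$, $F=\varnothing$, or $\max E<\min F$. For $E\subset\mathbb{N}$ and $x=\sum a_ne_n\in c_{00}$, $Ex=\sum_{n\in E}a_ne_n$. $2^{\mathbb{N}}$ (the power set of $\mathbb{N}$) carries the topology of $\{0,1\}^{\mathbb{N}}$ via indicator functions. A family $\mathcal{F}\subset[\mathbb{N}]^{<\mathbb{N}}$ (finite subsets) is spreading if whenever $(m_i)_{i=1}^k\in\mathcal{F}$ (increasing enumeration) and $m_i\leqslant n_i$ with $n_1<\dots<n_k$, then $(n_i)_{i=1}^k\in\mathcal{F}$; hereditary if closed under subsets; regular if spreading, hereditary and compact. For regular $\mathcal{F}$, $\mathcal{F}'$ is $\mathcal{F}$ minus its maximal (under inclusion) members; $\mathcal{F}^0=\mathcal{F}$,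 $\mathcal{F}^{\xi+1}=(\mathcal{F}^\xi)'$, $\mathcal{F}^\xi=\bigcap_{\zeta<\xi}\mathcal{F}^\zeta$ for limit $\xi$; $CB(\mathcal{F})$ is the least $\xi$ with $\mathcal{F}^\xi=\varnothing$. Schreier families: $\mathcal{S}_0=\{\varnothing\}\cup\{\{n\}\}$; $\mathcal{S}=\{\varnothing\}\cup\{E:|E|\leqslant\min E\}$; $\mathcal{G}[\mathcal{F}]=\{\varnothing\}\cup\{\bigcup_{i=1}^nE_i:\varnothing\neq E_i\in\mathcal{F},E_1<\dots<E_n,(\min E_i)_{i=1}^n\in\mathcal{G}\}$; $\mathcal{S}_{\xi+1}=\mathcal{S}[\mathcal{S}_\xi]$; for limit $\xi<\omega_1$, with a fixed $\xi_n\uparrow\xi$ satisfying $\mathcal{S}_{\xi_n+1}\subset\mathcal{S}_{\xi_{n+1}}$, $\mathcal{S}_\xi=\{\varnothing\}\cup\{E\neq\varnothing:E\in\mathcal{S}_{\xi_{\min E}+1}\}$. For $\xi<\omega_1$, a bounded sequence $(x_n)$ in a Banach space is an $\ell_1^\xi+$-spreading model if $\inf\{\|x\|:F\in\mathcal{S}_\xi,x\in\mathrm{co}(x_n:n\in F)\}>0$, and $(x_n)$ is $\xi$-weakly null if no subsequence is an $\ell_1^\xi+$-spreading model. *)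

theory Defs
  imports "HOL-Analysis.Analysis"
begin

text \<open>Countable ordinals are represented by well-orders on subsets of nat
  (type nat rel), compared with the library relations <o and =o.\<close>

definition is_succ_of :: "nat rel \<Rightarrow> nat rel \<Rightarrow> bool" where
  "is_succ_of z r \<longleftrightarrow> Well_order z \<and> Well_order r \<and> (z, r) \<in> ordLess \<and>
     (\<forall>w :: nat rel. \<not> ((z, w) \<in> ordLess \<and> (w, r) \<in> ordLess))"

definition is_zero_ord :: "nat rel \<Rightarrow> bool" where
  "is_zero_ord r \<longleftrightarrow> Well_order r \<and> Field r = {}"

definition is_limit_ord :: "nat rel \<Rightarrow> bool" where
  "is_limit_ord r \<longleftrightarrow> Well_order r \<and> Field r \<noteq> {} \<and> \<not> (\<exists>z. is_succ_of z r)"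

text \<open>Ordinal exponentiation omega^eta: finitely supported functions from Field eta
  to nat, ordered by comparing the values at the eta-largest point of difference
  (Cantor normal form representation).\<close>

definition omega_pow :: "nat rel \<Rightarrow> (nat \<Rightarrow> nat) rel" where
  "omega_pow \<eta> = {(f, g).
     finite {a. f a \<noteq> 0} \<and> (\<forall>a. a \<notin> Field \<eta> \<longrightarrow> f a = 0) \<and>
     finite {a. g a \<noteq> 0} \<and> (\<forall>a. a \<notin> Field \<eta> \<longrightarrow> g a = 0) \<and>
     (f = g \<or> (\<exists>a\<in>Field \<eta>. f a < g a \<and>
                 (\<forall>b\<in>Field \<eta>. (a, b) \<in> \<eta> \<and> a \<noteq> b \<longrightarrow> f b = g b)))}"

text \<open>N = {1,2,...}; families are sets of finite subsets of {1..}.\<close>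

definition finite_family :: "nat set set \<Rightarrow> bool" where
  "finite_family F \<longleftrightarrow> (\<forall>E\<in>F. finite E \<and> E \<subseteq> {1..})"

definition spreading :: "nat set set \<Rightarrow> bool" where
  "spreading F \<longleftrightarrow> (\<forall>E\<in>F. \<forall>g :: nat \<Rightarrow> nat.
      strict_mono_on E g \<and> (\<forall>m\<in>E. m \<le> g m) \<longrightarrow> g ` E \<in> F)"

definition hereditary :: "nat set set \<Rightarrow> bool" where
  "hereditary F \<longleftrightarrow> (\<forall>E\<in>F. \<forall>G. G \<subseteq> E \<longrightarrow> G \<in> F)"

text \<open>Compactness in 2^N, identified with {0,1}^N via indicator functions.\<close>
definition compact_family :: "nat set set \<Rightarrow> bool" where
  "compact_family F \<longleftrightarrow>
     compactin (product_topology (\<lambda>_. discrete_topology (UNIV :: bool set)) UNIV)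
               ((\<lambda>E n. n \<in> E) ` F)"

definition regular :: "nat set set \<Rightarrow> bool" where
  "regular F \<longleftrightarrow> finite_family F \<and> spreading F \<and> hereditary F \<and> compact_family F"

definition contains_singletons :: "nat set set \<Rightarrow> bool" where
  "contains_singletons F \<longleftrightarrow> (\<forall>n\<ge>1. {n} \<in> F)"

definition fderiv :: "nat set set \<Rightarrow> nat set set" where
  "fderiv F = F - {E\<in>F. \<forall>G\<in>F. E \<subseteq> G \<longrightarrow> G = E}"

definition derivs :: "nat set set \<Rightarrow> (nat rel \<Rightarrow> nat set set) \<Rightarrow> bool" where
  "derivs F D \<longleftrightarrow>
     (\<forall>r s. Well_order r \<and> Well_order s \<and> (r, s) \<in> ordIso \<longrightarrow> D r = D s) \<and>
     (\<forall>r. is_zero_ord r \<longrightarrow> D r = F) \<and>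
     (\<forall>z r. is_succ_of z r \<longrightarrow> D r = fderiv (D z)) \<and>
     (\<forall>r. is_limit_ord r \<longrightarrow> D r = \<Inter> {D z | z. (z, r) \<in> ordLess})"

definition CB_less :: "nat set set \<Rightarrow> 'a rel \<Rightarrow> bool" where
  "CB_less F \<alpha> \<longleftrightarrow> (\<forall>D. derivs F D \<longrightarrow> (\<exists>\<xi> :: nat rel. (\<xi>, \<alpha>) \<in> ordLess \<and> D \<xi> = {}))"

definition schreier0 :: "nat set set" where
  "schreier0 = {{}} \<union> {{n} | n. 1 \<le> n}"

definition schreier1 :: "nat set set" where
  "schreier1 = {{}} \<union> {E. finite E \<and> E \<subseteq> {1..} \<and> E \<noteq> {} \<and> card E \<le> Min E}"

definition fam_prod :: "nat set set \<Rightarrow> nat set set \<Rightarrow> nat set set" where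
  "fam_prod G F = {{}} \<union> {\<Union> (E ` {..<k}) | (k :: nat) E.
      (\<forall>i<k. E i \<noteq> {} \<and> E i \<in> F) \<and>
      (\<forall>i j. i < j \<and> j < k \<longrightarrow> Max (E i) < Min (E j)) \<and>
      (\<lambda>i. Min (E i)) ` {..<k} \<in> G}"

text \<open>S is an admissible system of Schreier families (S r = S_xi for r of order type xi).\<close>
definition schreier_system :: "(nat rel \<Rightarrow> nat set set) \<Rightarrow> bool" where
  "schreier_system S \<longleftrightarrow>
     (\<forall>r s. Well_order r \<and> Well_order s \<and> (r, s) \<in> ordIso \<longrightarrow> S r = S s) \<and>
     (\<forall>r. is_zero_ord r \<longrightarrow> S r = schreier0) \<and>
     (\<forall>z r. is_succ_of z r \<longrightarrow> S r = fam_prod schreier1 (S z)) \<and>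
     (\<forall>r. is_limit_ord r \<longrightarrow>
        (\<exists>\<xi>s \<sigma>s :: nat \<Rightarrow> nat rel.
           (\<forall>n\<ge>1. (\<xi>s n, r) \<in> ordLess \<and> is_succ_of (\<xi>s n) (\<sigma>s n)) \<and>
           (\<forall>n\<ge>1. (\<xi>s n, \<xi>s (Suc n)) \<in> ordLess) \<and>
           (\<forall>\<zeta> :: nat rel. (\<zeta>, r) \<in> ordLess \<longrightarrow> (\<exists>n\<ge>1. (\<zeta>, \<xi>s n) \<in> ordLess)) \<and>
           (\<forall>n\<ge>1. S (\<sigma>s n) \<subseteq> S (\<xi>s (Suc n))) \<and>
           S r = {{}} \<union> {E. E \<noteq> {} \<and> E \<in> S (\<sigma>s (Min E))}))"

text \<open>Vectors of c00 are functions nat => real (coordinates indexed by 1,2,...).\<close>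

definition ell2_part :: "nat set \<Rightarrow> (nat \<Rightarrow> real) \<Rightarrow> real" where
  "ell2_part I x = sqrt (\<Sum>j\<in>I. (x j)\<^sup>2)"

definition block_norm :: "nat set set \<Rightarrow> (nat \<Rightarrow> real) \<Rightarrow> real" where
  "block_norm F x = Sup {(\<Sum>i<t. ell2_part (I i) x) | (t :: nat) I.
      1 \<le> t \<and> (\<forall>i<t. I i \<noteq> {} \<and> finite (I i) \<and> I i \<subseteq> {1..}) \<and>
      (\<forall>i j. i < j \<and> j < t \<longrightarrow> Max (I i) < Min (I j)) \<and>
      (\<lambda>i. Min (I i)) ` {..<t} \<in> F}"

definition bracket_norm :: "(nat \<Rightarrow> nat set set) \<Rightarrow> (nat \<Rightarrow> real) \<Rightarrow> (nat \<Rightarrow> real) \<Rightarrow> real" where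
  "bracket_norm F \<omega> x = (SUP n\<in>{1..}. \<omega> n * block_norm (F n) x)"

definition unit_vec :: "nat \<Rightarrow> nat \<Rightarrow> real" where
  "unit_vec n = (\<lambda>j. if j = n then 1 else 0)"

definition l1_spreading_model ::
  "nat set set \<Rightarrow> ((nat \<Rightarrow> real) \<Rightarrow> real) \<Rightarrow> (nat \<Rightarrow> nat \<Rightarrow> real) \<Rightarrow> bool" where
  "l1_spreading_model G N xs \<longleftrightarrow>
     bdd_above ((\<lambda>n. N (xs n)) ` {1..}) \<and>
     (\<exists>\<delta>>0. \<forall>E\<in>G. \<forall>a :: nat \<Rightarrow> real.
        (\<forall>i\<in>E. 0 \<le> a i) \<and> (\<Sum>i\<in>E. a i) = 1 \<longrightarrow>
        \<delta> \<le> N (\<lambda>j. \<Sum>i\<in>E. a i * xs i j))"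

definition weakly_null_wrt ::
  "nat set set \<Rightarrow> ((nat \<Rightarrow> real) \<Rightarrow> real) \<Rightarrow> (nat \<Rightarrow> nat \<Rightarrow> real) \<Rightarrow> bool" where
  "weakly_null_wrt G N xs \<longleftrightarrow>
     \<not> (\<exists>k :: nat \<Rightarrow> nat. strict_mono_on {1..} k \<and> (\<forall>n\<ge>1. 1 \<le> k n) \<and>
           l1_spreading_model G N (\<lambda>n. xs (k n)))"

end

(* Each F_n has Cantor-Bendixson index below omega^eta, so it carries a rank into the Cantor
   normal forms below omega^eta that strictly decreases along proper inclusion.  By transfinite
   induction on r, every Schreier family S_r contains, arbitrarily far out, sets E with convex
   weights giving mass < eps to every member of finitely many hereditary families ranked in
   omega^s, s <= r.  At a successor one averages many successive averages from the predecessor: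
   along the initial parts of a set the top coordinate of its rank drops only boundedly often,
   and where it does not drop the remaining coordinates give a ranking in the predecessor.  At
   a limit, finitely many ranks live below some earlier ordinal.
   For the resulting average x of unit vectors, Cauchy-Schwarz and spreading bound |x|_n by the
   square root of the largest weight of a member of F_n.  Hence [x] is small: for the finitely
   many n handled by the induction directly, and for the others because varpi_n -> 0.  So no
   subsequence of the basis is an l_1^eta spreading model. *)

theory Submission
  imports Defs
begin

unbundle cardinal_syntax
(* Set_Algebras, imported by HOL-Analysis, also uses =o *)
no_notation elt_set_eq (infix "=o" 50)

section \<open>Well-orders as ordinals\<close>

lemma Well_order_trans: "Well_order r \<Longrightarrow> (a, b) \<in> r \<Longrightarrow> (b, c) \<in> r \<Longrightarrow> (a, c) \<in> r"
  using wo_rel.TRANS[of r] transD[of r] unfolding wo_rel_def by blast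

lemma Well_order_antisym: "Well_order r \<Longrightarrow> (a, b) \<in> r \<Longrightarrow> (b, a) \<in> r \<Longrightarrow> a = b"
  using wo_rel.ANTISYM[of r] antisymD[of r] unfolding wo_rel_def by blast

lemma Well_order_total:
  "Well_order r \<Longrightarrow> a \<in> Field r \<Longrightarrow> b \<in> Field r \<Longrightarrow> (a, b) \<in> r \<or> (b, a) \<in> r"
  using wo_rel.TOTALS[of r] unfolding wo_rel_def by blast

lemma Well_order_refl: "Well_order r \<Longrightarrow> a \<in> Field r \<Longrightarrow> (a, a) \<in> r"
  using Well_order_total[of r a a] by blast

lemma Field_Restr_underS: "Well_order r \<Longrightarrow> Field (Restr r (underS r b)) = underS r b"
  by (simp add: Field_Restr_ofilter wo_rel.underS_ofilter wo_rel_def)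

lemma underS_mono:
  assumes "Well_order r" "b \<in> underS r c"
  shows "underS r b \<subseteq> underS r c"
proof
  fix x assume "x \<in> underS r b"
  then have xb: "(x, b) \<in> r" "x \<noteq> b" unfolding underS_def by auto
  have bc: "(b, c) \<in> r" "b \<noteq> c" using assms(2) unfolding underS_def by auto
  have "(x, c) \<in> r" using Well_order_trans[OF assms(1) xb(1) bc(1)] .
  moreover have "x \<noteq> c" using xb bc Well_order_antisym[OF assms(1)] by blast
  ultimately show "x \<in> underS r c" unfolding underS_def by blast
qed

lemma Restr_underS_Restr_underS:
  assumes "Well_order r" "b \<in> underS r c"
  shows "Restr (Restr r (underS r c)) (underS (Restr r (underS r c)) b) = Restr r (underS r b)"
proof -
  have sub: "underS r b \<subseteq> underS r c" using underS_mono[OF assms] .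
  have "underS (Restr r (underS r c)) b = underS r b"
  proof
    show "underS (Restr r (underS r c)) b \<subseteq> underS r b" unfolding underS_def by blast
    show "underS r b \<subseteq> underS (Restr r (underS r c)) b"
      using sub assms(2) unfolding underS_def by blast
  qed
  with sub show ?thesis by blast
qed

lemma Restr_underS_ordLess_Restr_underS:
  assumes "Well_order r" "b \<in> underS r c"
  shows "Restr r (underS r b) <o Restr r (underS r c)"
proof -
  have "Field (Restr r (underS r c)) \<noteq> {}"
    using Field_Restr_underS[OF assms(1)] assms(2) by auto
  then have "Restr (Restr r (underS r c)) (underS (Restr r (underS r c)) b) <o Restr r (underS r c)"
    by (rule underS_Restr_ordLess[OF Well_order_Restr[OF assms(1)]])
  then show ?thesis unfolding Restr_underS_Restr_underS[OF assms] .
qed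

lemma ordLess_Well_orderD: "r <o s \<Longrightarrow> Well_order r \<and> Well_order s"
  unfolding ordLess_def by blast

lemma ordIso_Well_orderD: "r =o s \<Longrightarrow> Well_order r \<and> Well_order s"
  unfolding ordIso_def by blast

lemma ordIso_Field_empty: "r =o s \<Longrightarrow> Field r = {} \<longleftrightarrow> Field s = {}"
  unfolding ordIso_def iso_def bij_betw_def by auto

lemma ordLeq_Field_empty: "s \<le>o r \<Longrightarrow> Field r = {} \<Longrightarrow> Field s = {}"
  unfolding ordLeq_def using embed_Field by fastforce

lemma is_succ_ofD:
  fixes w :: "nat rel"
  assumes "is_succ_of z r"
  shows "Well_order z" "Well_order r" "z <o r" "\<not> (z <o w \<and> w <o r)"
  using assms unfolding is_succ_of_def by blast+

lemma is_succ_of_ordIso: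
  assumes "is_succ_of z r" "r =o s"
  shows "is_succ_of z s"
proof -
  have "z <o s" using assms is_succ_ofD(3) ordLess_ordIso_trans by blast
  moreover have "\<not> (z <o w \<and> w <o s)" for w :: "nat rel"
  proof
    assume "z <o w \<and> w <o s"
    moreover have "w <o s \<Longrightarrow> w <o r"
      using ordLess_ordIso_trans ordIso_symmetric[OF assms(2)] by blast
    ultimately show False using is_succ_ofD(4)[OF assms(1)] by blast
  qed
  ultimately show ?thesis
    using assms is_succ_ofD(1) ordIso_Well_orderD unfolding is_succ_of_def by blast
qed

lemma is_succ_of_unique:
  assumes "is_succ_of z1 r" "is_succ_of z2 s" "r =o s"
  shows "z1 =o z2"
proof -
  have "z2 <o r" using is_succ_ofD(3)[OF assms(2)] assms(3) ordLess_ordIso_trans ordIso_symmetric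
    by blast
  then have "\<not> z1 <o z2" using is_succ_ofD(4)[OF assms(1)] by blast
  moreover have "z1 <o s" using is_succ_ofD(3)[OF assms(1)] assms(3) ordLess_ordIso_trans by blast
  then have "\<not> z2 <o z1" using is_succ_ofD(4)[OF assms(2)] by blast
  ultimately show ?thesis
    using is_succ_ofD(1)[OF assms(1)] is_succ_ofD(1)[OF assms(2)]
      ordLess_or_ordLeq ordLeq_iff_ordLess_or_ordIso ordIso_symmetric by blast
qed

lemma is_succ_of_Restr_underS_greatest:
  assumes "Well_order s" "a \<in> Field s" "\<forall>x\<in>Field s. (x, a) \<in> s"
  shows "is_succ_of (Restr s (underS s a)) s"
  unfolding is_succ_of_def
proof (intro conjI allI notI)
  let ?sa = "Restr s (underS s a)"
  fix w :: "nat rel"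
  assume w: "?sa <o w \<and> w <o s"
  then obtain b where b: "b \<in> Field s" "w =o Restr s (underS s b)"
    using ordLess_iff_ordIso_Restr[OF assms(1)] ordLess_Well_orderD by blast
  show False
  proof (cases "b = a")
    case True
    then show False using w b(2) ordLess_ordIso_trans ordLess_irreflexive by blast
  next
    case False
    then have "b \<in> underS s a" using assms(3) b(1) unfolding underS_def by blast
    then have "w <o ?sa"
      using Restr_underS_ordLess_Restr_underS[OF assms(1)] b(2) ordIso_ordLess_trans by blast
    then show False using w ordLess_transitive ordLess_irreflexive by blast
  qed
next
  show "Restr s (underS s a) <o s"
    by (rule underS_Restr_ordLess[OF assms(1)]) (use assms(2) in blast)
qed (use assms Well_order_Restr in blast)+

lemma is_succ_of_imp_greatest:
  assumes "is_succ_of z s"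
  obtains a where "a \<in> Field s" "\<forall>x\<in>Field s. (x, a) \<in> s" "z =o Restr s (underS s a)"
proof -
  have ws: "Well_order s" using is_succ_ofD[OF assms] by blast
  obtain a where a: "a \<in> Field s" "z =o Restr s (underS s a)"
    using ordLess_iff_ordIso_Restr[OF ws] is_succ_ofD[OF assms] by blast
  have "(x, a) \<in> s" if x: "x \<in> Field s" for x
  proof (rule ccontr)
    assume "(x, a) \<notin> s"
    then have "a \<in> underS s x"
      using Well_order_total[OF ws x a(1)] Well_order_refl[OF ws a(1)] unfolding underS_def by auto
    then have "z <o Restr s (underS s x)"
      using Restr_underS_ordLess_Restr_underS[OF ws] a(2) ordIso_ordLess_trans by blast
    moreover have "Restr s (underS s x) <o s" using underS_Restr_ordLess[of s x] ws x by blast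
    ultimately show False using is_succ_ofD(4)[OF assms] by blast
  qed
  then show thesis using that a by blast
qed

lemma is_limit_ord_no_greatest:
  fixes s r :: "nat rel"
  assumes "s =o r" "is_limit_ord r" "a \<in> Field s"
  obtains x where "x \<in> Field s" "(x, a) \<notin> s"
proof (rule ccontr)
  assume "\<not> thesis"
  then have "\<forall>x\<in>Field s. (x, a) \<in> s" using that by blast
  then have "is_succ_of (Restr s (underS s a)) r"
    using is_succ_of_Restr_underS_greatest assms ordIso_Well_orderD is_succ_of_ordIso by blast
  then show False using assms(2) unfolding is_limit_ord_def by blast
qed

lemma ordinal_cases:
  assumes "Well_order r"
  obtains "is_zero_ord r" | z where "is_succ_of z r" | "is_limit_ord r"
  using assms unfolding is_zero_ord_def is_limit_ord_def by blast

section \<open>Cantor--Bendixson derivatives and ranks\<close>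

lemma derivsD:
  assumes "derivs F D"
  shows "Well_order r \<Longrightarrow> Well_order s \<Longrightarrow> r =o s \<Longrightarrow> D r = D s"
    and "is_zero_ord r \<Longrightarrow> D r = F"
    and "is_succ_of z r \<Longrightarrow> D r = fderiv (D z)"
    and "is_limit_ord r \<Longrightarrow> D r = \<Inter> {D z | z. z <o r}"
  using assms unfolding derivs_def by blast+

text \<open>CB_less only constrains sequences D with derivs F D, so one such sequence has to be
  constructed; it is defined by well-founded recursion along ordLess.\<close>

definition cb_derivs :: "nat set set \<Rightarrow> nat rel \<Rightarrow> nat set set" where
  "cb_derivs F = wfrec (ordLess :: (nat rel \<times> nat rel) set)
     (\<lambda>D r. if Field r = {} then F
            else if \<exists>z. is_succ_of z r then fderiv (D (SOME z. is_succ_of z r))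
            else \<Inter> {D z | z. z <o r})"

lemma cb_derivs_unfold:
  "cb_derivs F r = (if Field r = {} then F
     else if \<exists>z. is_succ_of z r then fderiv (cb_derivs F (SOME z. is_succ_of z r))
     else \<Inter> {cb_derivs F z | z. z <o r})"
proof -
  have unf: "cb_derivs F r = (if Field r = {} then F
     else if \<exists>z. is_succ_of z r then fderiv (cut (cb_derivs F) ordLess r (SOME z. is_succ_of z r))
     else \<Inter> {cut (cb_derivs F) ordLess r z | z. z <o r})"
    unfolding cb_derivs_def by (subst wfrec[OF wf_ordLess]) simp
  have "cut (cb_derivs F) ordLess r (SOME z. is_succ_of z r) = cb_derivs F (SOME z. is_succ_of z r)"
    if "\<exists>z. is_succ_of z r"
    using someI_ex[OF that] is_succ_ofD(3) by (simp add: cut_apply)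
  moreover have "{cut (cb_derivs F) ordLess r z | z. z <o r} = {cb_derivs F z | z. z <o r}"
    by (metis cut_apply mem_Collect_eq)
  ultimately show ?thesis using unf by presburger
qed

lemma cb_derivs_ordIso:
  "Well_order r \<Longrightarrow> Well_order s \<Longrightarrow> r =o s \<Longrightarrow> cb_derivs F r = cb_derivs F s"
proof (induction r arbitrary: s rule: wf_induct[OF wf_ordLess])
  case (1 r)
  have Field_iff: "Field r = {} \<longleftrightarrow> Field s = {}" using ordIso_Field_empty[OF 1(4)] .
  have succ_iff: "is_succ_of z r \<longleftrightarrow> is_succ_of z s" for z
    using is_succ_of_ordIso 1(4) ordIso_symmetric by blast
  have less_iff: "z <o r \<longleftrightarrow> z <o s" for z :: "nat rel"
    using ordLess_ordIso_trans 1(4) ordIso_symmetric by blast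
  show ?case
  proof (cases "\<exists>z. is_succ_of z r")
    case True
    define zr zs where "zr = (SOME z. is_succ_of z r)" and "zs = (SOME z. is_succ_of z s)"
    have zr: "is_succ_of zr r" using someI_ex[OF True] unfolding zr_def .
    have "\<exists>z. is_succ_of z s" using True succ_iff by blast
    then have zs: "is_succ_of zs s" unfolding zs_def by (rule someI_ex)
    have "cb_derivs F zr = cb_derivs F zs"
      using 1(1) is_succ_ofD(1,3)[OF zr] is_succ_ofD(1)[OF zs] is_succ_of_unique[OF zr zs 1(4)]
      by blast
    then show ?thesis using True Field_iff succ_iff
      by (subst (1 2) cb_derivs_unfold) (simp add: zr_def zs_def)
  next
    case False
    then show ?thesis using Field_iff succ_iff less_iff
      by (subst (1 2) cb_derivs_unfold) simp
  qed
qed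

lemma derivs_cb_derivs: "derivs F (cb_derivs F)"
  unfolding derivs_def
proof (intro conjI allI impI)
  fix r s :: "nat rel"
  assume "Well_order r \<and> Well_order s \<and> r =o s"
  then show "cb_derivs F r = cb_derivs F s" using cb_derivs_ordIso by blast
next
  fix r :: "nat rel"
  assume "is_zero_ord r"
  then show "cb_derivs F r = F" unfolding is_zero_ord_def by (simp add: cb_derivs_unfold[of F r])
next
  fix z r :: "nat rel"
  assume z: "is_succ_of z r"
  define z' where "z' = (SOME z. is_succ_of z r)"
  have z': "is_succ_of z' r" using someI[of "\<lambda>z. is_succ_of z r", OF z] unfolding z'_def .
  have "cb_derivs F z' = cb_derivs F z"
    using cb_derivs_ordIso[OF is_succ_ofD(1)[OF z'] is_succ_ofD(1)[OF z]]
      is_succ_of_unique[OF z' z ordIso_reflexive[OF is_succ_ofD(2)[OF z]]] by blast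
  moreover have "Field r \<noteq> {}"
    using is_succ_ofD(3)[OF z] ordLess_iff_ordIso_Restr[OF is_succ_ofD(2,1)[OF z]] by blast
  moreover have "\<exists>z. is_succ_of z r" using z by blast
  ultimately show "cb_derivs F r = fderiv (cb_derivs F z)"
    unfolding z'_def by (simp add: cb_derivs_unfold[of F r])
next
  fix r :: "nat rel"
  assume "is_limit_ord r"
  then show "cb_derivs F r = \<Inter> {cb_derivs F z | z. z <o r}"
    unfolding is_limit_ord_def by (simp add: cb_derivs_unfold[of F r])
qed

text \<open>A set leaves the derived families at a successor stage, where it is maximal; so every
  proper superset has left strictly earlier.\<close>

lemma derivs_superset_leaves_earlier:
  assumes d: "derivs F D" and w: "Well_order X" and E: "E \<in> F" "E \<notin> D X" "E \<subset> E'"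
    and alive: "\<forall>b\<in>Field X. E \<in> D (Restr X (underS X b))"
  shows "\<exists>b\<in>Field X. E' \<notin> D (Restr X (underS X b))"
  using w
proof (cases rule: ordinal_cases)
  case 1
  then show ?thesis using derivsD(2)[OF d] E by simp
next
  case (2 z)
  obtain b where b: "b \<in> Field X" "z =o Restr X (underS X b)"
    using ordLess_iff_ordIso_Restr[OF w is_succ_ofD(1)[OF 2]] is_succ_ofD(3)[OF 2] by blast
  have "D z = D (Restr X (underS X b))"
    using derivsD(1)[OF d is_succ_ofD(1)[OF 2] Well_order_Restr[OF w] b(2)] .
  then have "D X = fderiv (D (Restr X (underS X b)))" using derivsD(3)[OF d 2] by simp
  then have "E' \<notin> D (Restr X (underS X b))"
    using E alive b(1) unfolding fderiv_def by blast
  then show ?thesis using b(1) by blast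
next
  case 3
  then obtain z where z: "z <o X" "E \<notin> D z" using derivsD(4)[OF d] E(2) by blast
  then obtain b where b: "b \<in> Field X" "z =o Restr X (underS X b)"
    using ordLess_iff_ordIso_Restr[OF w] ordLess_Well_orderD by blast
  then have "D z = D (Restr X (underS X b))"
    using derivsD(1)[OF d] ordLess_Well_orderD[OF z(1)] Well_order_Restr[OF w] by blast
  then show ?thesis using alive b(1) z(2) by simp
qed

lemma derivs_superset_leaves_strictly_earlier:
  assumes d: "derivs F D" and w: "Well_order \<xi>" and e: "D \<xi> = {}"
    and E: "E \<in> F" "E \<subset> E'"
  obtains b' where "b' \<in> Field \<xi>" "E' \<notin> D (Restr \<xi> (underS \<xi> b'))"
    "\<And>b. b \<in> Field \<xi> \<Longrightarrow> E \<notin> D (Restr \<xi> (underS \<xi> b)) \<Longrightarrow> b' \<in> underS \<xi> b"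
proof (cases "\<forall>b\<in>Field \<xi>. E \<in> D (Restr \<xi> (underS \<xi> b))")
  case True
  then show thesis using derivs_superset_leaves_earlier[OF d w E(1) _ E(2)] e that by blast
next
  case False
  define B where "B = {b \<in> Field \<xi>. E \<notin> D (Restr \<xi> (underS \<xi> b))}"
  define \<beta> where "\<beta> = wo_rel.minim \<xi> B"
  have wor: "wo_rel \<xi>" using w unfolding wo_rel_def .
  have Bsub: "B \<subseteq> Field \<xi>" unfolding B_def by blast
  have "B \<noteq> {}" using False unfolding B_def by blast
  then have \<beta>: "\<beta> \<in> B" using wo_rel.minim_in[OF wor Bsub] unfolding \<beta>_def by blast
  have \<beta>_least: "(\<beta>, b) \<in> \<xi>" if "b \<in> B" for b
    using wo_rel.minim_least[OF wor Bsub that] unfolding \<beta>_def .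
  let ?X = "Restr \<xi> (underS \<xi> \<beta>)"
  have seg: "Restr ?X (underS ?X b) = Restr \<xi> (underS \<xi> b)" if "b \<in> Field ?X" for b
    using Restr_underS_Restr_underS[OF w] Field_Restr_underS[OF w] that by simp
  have "\<forall>b\<in>Field ?X. E \<in> D (Restr ?X (underS ?X b))"
  proof
    fix b assume b: "b \<in> Field ?X"
    then have "b \<in> underS \<xi> \<beta>" using Field_Restr_underS[OF w] by simp
    then have "b \<notin> B" using \<beta>_least Well_order_antisym[OF w] unfolding underS_def by blast
    moreover have "b \<in> Field \<xi>" using \<open>b \<in> underS \<xi> \<beta>\<close> unfolding underS_def Field_def by blast
    ultimately show "E \<in> D (Restr ?X (underS ?X b))" using seg[OF b] unfolding B_def by simp
  qed
  moreover have "E \<notin> D ?X" using \<beta> unfolding B_def by blast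
  ultimately obtain b' where b': "b' \<in> Field ?X" "E' \<notin> D (Restr ?X (underS ?X b'))"
    using derivs_superset_leaves_earlier[OF d Well_order_Restr[OF w] E(1) _ E(2)] by blast
  have b'\<beta>: "b' \<in> underS \<xi> \<beta>" using b'(1) Field_Restr_underS[OF w] by simp
  show thesis
  proof (rule that)
    show "b' \<in> Field \<xi>" using b'\<beta> unfolding underS_def Field_def by blast
    show "E' \<notin> D (Restr \<xi> (underS \<xi> b'))" using b' seg by simp
    fix b assume "b \<in> Field \<xi>" "E \<notin> D (Restr \<xi> (underS \<xi> b))"
    then have "(\<beta>, b) \<in> \<xi>" using \<beta>_least unfolding B_def by blast
    then show "b' \<in> underS \<xi> b"
      using b'\<beta> Well_order_trans[OF w] Well_order_antisym[OF w] unfolding underS_def by blast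
  qed
qed

lemma ordLess_embeds_onto_underS:
  fixes \<xi> :: "'a rel" and W :: "'b rel"
  assumes "\<xi> <o W"
  obtains f0 h where "f0 \<in> Field W" "inj_on h (Field \<xi>)" "h ` Field \<xi> = underS W f0"
    "\<And>a b. (a, b) \<in> \<xi> \<Longrightarrow> (h a, h b) \<in> W"
proof -
  have wW: "Well_order W" and w: "Well_order \<xi>" using ordLess_Well_orderD[OF assms] by auto
  obtain f0 where f0: "f0 \<in> Field W" "\<xi> =o Restr W (underS W f0)"
    using ordLess_iff_ordIso_Restr[OF wW w] assms by blast
  obtain h where h: "iso \<xi> (Restr W (underS W f0)) h" using f0(2) unfolding ordIso_def by blast
  have "inj_on h (Field \<xi>)" "h ` Field \<xi> = underS W f0"
    using h Field_Restr_underS[OF wW] unfolding iso_def bij_betw_def by auto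
  moreover have "(h a, h b) \<in> W" if "(a, b) \<in> \<xi>" for a b
  proof -
    have "a \<in> Field \<xi>" "b \<in> Field \<xi>" using that by (auto intro: FieldI1 FieldI2)
    then show ?thesis using h that unfolding iso_iff2 by blast
  qed
  ultimately show thesis using that f0(1) by blast
qed

text \<open>The rank of a set is the stage at which it leaves the derived families.\<close>

lemma derivs_empty_imp_rank:
  fixes W :: "'b rel"
  assumes d: "derivs F D" and lt: "\<xi> <o W" and e: "D \<xi> = {}"
  obtains \<rho> where "\<And>E E'. E \<in> F \<Longrightarrow> E \<subset> E' \<Longrightarrow> (\<rho> E', \<rho> E) \<in> W \<and> \<rho> E' \<noteq> \<rho> E"
proof -
  have w: "Well_order \<xi>" using ordLess_Well_orderD[OF lt] by auto
  obtain f0 h where "f0 \<in> Field W" and hinj: "inj_on h (Field \<xi>)"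
    and himg: "h ` Field \<xi> = underS W f0" and hmono: "\<And>a b. (a, b) \<in> \<xi> \<Longrightarrow> (h a, h b) \<in> W"
    by (rule ordLess_embeds_onto_underS[OF lt]) (rule that)
  define B where "B E = {b \<in> Field \<xi>. E \<notin> D (Restr \<xi> (underS \<xi> b))}" for E
  define \<rho> where "\<rho> E = (if B E = {} then f0 else h (wo_rel.minim \<xi> (B E)))" for E
  have wor: "wo_rel \<xi>" using w unfolding wo_rel_def .
  have Bsub: "B E \<subseteq> Field \<xi>" for E unfolding B_def by blast
  have minim_in: "wo_rel.minim \<xi> (B E) \<in> B E" if "B E \<noteq> {}" for E
    using wo_rel.minim_in[OF wor Bsub that] .
  have minim_least: "(wo_rel.minim \<xi> (B E), b) \<in> \<xi>" if "b \<in> B E" for E b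
    using wo_rel.minim_least[OF wor Bsub that] .
  have "(\<rho> E', \<rho> E) \<in> W \<and> \<rho> E' \<noteq> \<rho> E" if E: "E \<in> F" "E \<subset> E'" for E E'
  proof -
    obtain b' where "b' \<in> Field \<xi>" "E' \<notin> D (Restr \<xi> (underS \<xi> b'))"
      and below: "\<And>b. b \<in> Field \<xi> \<Longrightarrow> E \<notin> D (Restr \<xi> (underS \<xi> b)) \<Longrightarrow> b' \<in> underS \<xi> b"
      using derivs_superset_leaves_strictly_earlier[OF d w e E] by blast
    then have b': "b' \<in> B E'" "\<And>b. b \<in> B E \<Longrightarrow> b' \<in> underS \<xi> b"
      unfolding B_def by blast+
    define \<beta>' where "\<beta>' = wo_rel.minim \<xi> (B E')"
    have "B E' \<noteq> {}" using b'(1) by blast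
    then have \<beta>': "\<beta>' \<in> Field \<xi>" "\<rho> E' = h \<beta>'"
      using minim_in Bsub unfolding \<beta>'_def \<rho>_def by auto
    have \<beta>'b': "(\<beta>', b') \<in> \<xi>" using minim_least[OF b'(1)] unfolding \<beta>'_def .
    show ?thesis
    proof (cases "B E = {}")
      case True
      have "h \<beta>' \<in> underS W f0" using himg \<beta>'(1) by blast
      then show ?thesis using True \<beta>'(2) unfolding \<rho>_def underS_def by simp
    next
      case False
      define \<beta> where "\<beta> = wo_rel.minim \<xi> (B E)"
      have \<beta>: "\<beta> \<in> Field \<xi>" "b' \<in> underS \<xi> \<beta>" "\<rho> E = h \<beta>"
        using minim_in[OF False] Bsub b'(2) False unfolding \<beta>_def \<rho>_def by auto
      then have "(\<beta>', \<beta>) \<in> \<xi>" "\<beta>' \<noteq> \<beta>"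
        using \<beta>'b' Well_order_trans[OF w] Well_order_antisym[OF w] unfolding underS_def by blast+
      moreover from this have "h \<beta>' \<noteq> h \<beta>" using hinj \<beta>(1) \<beta>'(1) unfolding inj_on_def by blast
      ultimately show ?thesis using hmono \<beta>(3) \<beta>'(2) by simp
    qed
  qed
  then show thesis using that by blast
qed

definition omega_pow_less :: "nat rel \<Rightarrow> (nat \<Rightarrow> nat) \<Rightarrow> (nat \<Rightarrow> nat) \<Rightarrow> bool" where
  "omega_pow_less s f g \<longleftrightarrow> (f, g) \<in> omega_pow s \<and> f \<noteq> g"

lemma omega_pow_less_iff:
  "omega_pow_less s f g \<longleftrightarrow>
     finite {x. f x \<noteq> 0} \<and> (\<forall>x. x \<notin> Field s \<longrightarrow> f x = 0) \<and>
     finite {x. g x \<noteq> 0} \<and> (\<forall>x. x \<notin> Field s \<longrightarrow> g x = 0) \<and>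
     (\<exists>b\<in>Field s. f b < g b \<and> (\<forall>c\<in>Field s. (b, c) \<in> s \<and> b \<noteq> c \<longrightarrow> f c = g c))"
  unfolding omega_pow_less_def omega_pow_def by auto

definition ranked :: "nat rel \<Rightarrow> nat set set \<Rightarrow> (nat set \<Rightarrow> nat \<Rightarrow> nat) \<Rightarrow> bool" where
  "ranked s G \<rho> \<longleftrightarrow> (\<forall>A\<in>G. \<forall>B\<in>G. A \<subset> B \<longrightarrow> omega_pow_less s (\<rho> B) (\<rho> A))"

lemma CB_less_imp_ranked:
  assumes "CB_less F (omega_pow \<eta>)"
  obtains \<rho> where "ranked \<eta> F \<rho>"
proof -
  obtain \<xi> :: "nat rel" where "\<xi> <o omega_pow \<eta>" "cb_derivs F \<xi> = {}"
    using assms derivs_cb_derivs unfolding CB_less_def by blast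
  then obtain \<rho> where "\<And>E E'. E \<in> F \<Longrightarrow> E \<subset> E' \<Longrightarrow> omega_pow_less \<eta> (\<rho> E') (\<rho> E)"
    using derivs_empty_imp_rank[OF derivs_cb_derivs] unfolding omega_pow_less_def by metis
  then show thesis using that unfolding ranked_def by blast
qed

section \<open>Operations on ranked families\<close>

lemma omega_pow_lessD:
  assumes "omega_pow_less s f g"
  shows "finite {x. f x \<noteq> 0}" "finite {x. g x \<noteq> 0}"
    and "f x \<noteq> 0 \<Longrightarrow> x \<in> Field s" "g x \<noteq> 0 \<Longrightarrow> x \<in> Field s"
    and "\<exists>b\<in>Field s. f b < g b \<and> (\<forall>c\<in>Field s. (b, c) \<in> s \<and> b \<noteq> c \<longrightarrow> f c = g c)"
  using assms unfolding omega_pow_less_iff by auto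

lemma omega_pow_less_Field_empty: "Field s = {} \<Longrightarrow> \<not> omega_pow_less s f g"
  unfolding omega_pow_less_iff by blast

lemma omega_pow_less_greatest_le:
  assumes "omega_pow_less s f g" "a \<in> Field s" "\<forall>x\<in>Field s. (x, a) \<in> s"
  shows "f a \<le> g a"
proof -
  obtain b where b: "b \<in> Field s" "f b < g b" "\<forall>c\<in>Field s. (b, c) \<in> s \<and> b \<noteq> c \<longrightarrow> f c = g c"
    using assms(1) unfolding omega_pow_less_iff by blast
  show ?thesis
  proof (cases "b = a")
    case False
    then show ?thesis using b(1,3) assms(2,3) by simp
  qed (use b in simp)
qed

lemma omega_pow_less_drop_greatest:
  assumes ws: "Well_order s" and less: "omega_pow_less s f g" and eq: "f a = g a"
    and greatest: "\<forall>x\<in>Field s. (x, a) \<in> s"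
  shows "omega_pow_less (Restr s (underS s a)) (f(a := 0)) (g(a := 0))"
proof -
  have below: "x \<in> underS s a" if "x \<in> Field s" "x \<noteq> a" for x
    using greatest that unfolding underS_def by blast
  have restrict: "finite {x. (h(a := 0)) x \<noteq> 0} \<and> (\<forall>x. x \<notin> underS s a \<longrightarrow> (h(a := 0)) x = 0)"
    if "finite {x. h x \<noteq> 0}" "\<forall>x. x \<notin> Field s \<longrightarrow> h x = 0" for h :: "nat \<Rightarrow> nat"
  proof
    show "finite {x. (h(a := 0)) x \<noteq> 0}" by (rule finite_subset[OF _ that(1)]) auto
    show "\<forall>x. x \<notin> underS s a \<longrightarrow> (h(a := 0)) x = 0" using below that(2) by auto
  qed
  obtain b where b: "b \<in> Field s" "f b < g b" "\<forall>c\<in>Field s. (b, c) \<in> s \<and> b \<noteq> c \<longrightarrow> f c = g c"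
    using omega_pow_lessD(5)[OF less] by blast
  have "b \<noteq> a" using b(2) eq by auto
  then have "b \<in> underS s a" "(f(a := 0)) b < (g(a := 0)) b" using below b(1,2) by auto
  moreover have "\<forall>c\<in>underS s a. (b, c) \<in> s \<and> b \<noteq> c \<longrightarrow> (f(a := 0)) c = (g(a := 0)) c"
    using b(3) unfolding underS_def Field_def by auto
  ultimately show ?thesis
    using less restrict unfolding omega_pow_less_iff Field_Restr_underS[OF ws] by blast
qed

lemma omega_pow_less_support_below:
  assumes ws: "Well_order s" and less: "omega_pow_less s f g" and g: "\<forall>x. g x \<noteq> 0 \<longrightarrow> (x, a) \<in> s"
  shows "\<forall>x. f x \<noteq> 0 \<longrightarrow> (x, a) \<in> s"
proof (intro allI impI)
  fix x assume fx: "f x \<noteq> 0"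
  obtain c where c: "c \<in> Field s" "f c < g c" "\<forall>d\<in>Field s. (c, d) \<in> s \<and> c \<noteq> d \<longrightarrow> f d = g d"
    using omega_pow_lessD(5)[OF less] by blast
  have x: "x \<in> Field s" using omega_pow_lessD(3)[OF less fx] .
  have ca: "(c, a) \<in> s" using g c(2) by simp
  show "(x, a) \<in> s"
  proof (rule ccontr)
    assume xa: "(x, a) \<notin> s"
    have "a \<in> Field s" using ca by (rule FieldI2)
    then have "(a, x) \<in> s" using Well_order_total[OF ws x] xa by blast
    then have "(c, x) \<in> s" using Well_order_trans[OF ws ca] by blast
    moreover have "c \<noteq> x" using xa ca by blast
    ultimately have "f x = g x" using c(3) x by blast
    then show False using g fx xa by simp
  qed
qed

lemma omega_pow_less_Restr_underS:
  assumes ws: "Well_order s" and less: "omega_pow_less s f g"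
    and f: "\<forall>x. f x \<noteq> 0 \<longrightarrow> x \<in> underS s b" and g: "\<forall>x. g x \<noteq> 0 \<longrightarrow> x \<in> underS s b"
  shows "omega_pow_less (Restr s (underS s b)) f g"
proof -
  obtain c where c: "c \<in> Field s" "f c < g c" "\<forall>d\<in>Field s. (c, d) \<in> s \<and> c \<noteq> d \<longrightarrow> f d = g d"
    using omega_pow_lessD(5)[OF less] by blast
  have "c \<in> underS s b" using g c(2) by simp
  moreover have "\<forall>d\<in>underS s b. (c, d) \<in> s \<and> c \<noteq> d \<longrightarrow> f d = g d"
    using c(3) unfolding underS_def Field_def by blast
  moreover have "\<forall>x. x \<notin> underS s b \<longrightarrow> f x = 0" "\<forall>x. x \<notin> underS s b \<longrightarrow> g x = 0"
    using f g by blast+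
  ultimately show ?thesis
    using less c(2) unfolding omega_pow_less_iff Field_Restr_underS[OF ws] by blast
qed

lemma ranked_greatest_antimono:
  assumes "ranked s G \<rho>" "X \<in> G" "Y \<in> G" "X \<subseteq> Y" "a \<in> Field s" "\<forall>x\<in>Field s. (x, a) \<in> s"
  shows "\<rho> Y a \<le> \<rho> X a"
proof (cases "X = Y")
  case False
  then have "omega_pow_less s (\<rho> Y) (\<rho> X)" using assms(1-4) unfolding ranked_def by blast
  then show ?thesis using omega_pow_less_greatest_le assms(5,6) by blast
qed simp

lemma ranked_Field_empty:
  assumes "hereditary G" "ranked s G \<rho>" "Field s = {}" "A \<in> G"
  shows "A = {}"
proof (rule ccontr)
  assume "A \<noteq> {}"
  moreover have "{} \<in> G" using assms(1,4) unfolding hereditary_def by blast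
  ultimately show False
    using assms(2-4) omega_pow_less_Field_empty unfolding ranked_def by blast
qed

definition tail_family :: "nat set set \<Rightarrow> (nat set \<Rightarrow> nat \<Rightarrow> nat) \<Rightarrow> nat \<Rightarrow> nat set \<Rightarrow> nat set set"
  where "tail_family G \<rho> a P = {C. C \<inter> P = {} \<and> P \<union> C \<in> G \<and> \<rho> (P \<union> C) a = \<rho> P a}"

lemma hereditary_tail_family:
  assumes "hereditary G" "ranked s G \<rho>" "a \<in> Field s" "\<forall>x\<in>Field s. (x, a) \<in> s"
  shows "hereditary (tail_family G \<rho> a P)"
  unfolding hereditary_def
proof (intro ballI allI impI)
  fix C C' assume C: "C \<in> tail_family G \<rho> a P" and sub: "C' \<subseteq> C"
  have C_def: "C \<inter> P = {}" "P \<union> C \<in> G" "\<rho> (P \<union> C) a = \<rho> P a"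
    using C unfolding tail_family_def by auto
  have G: "P \<union> C' \<in> G" "P \<in> G"
    using assms(1) C_def(2) sub unfolding hereditary_def by (meson Un_mono subset_refl sup_ge1)+
  have "\<rho> (P \<union> C) a \<le> \<rho> (P \<union> C') a"
    using ranked_greatest_antimono[OF assms(2) G(1) C_def(2) _ assms(3,4)] sub by blast
  moreover have "\<rho> (P \<union> C') a \<le> \<rho> P a"
    using ranked_greatest_antimono[OF assms(2) G(2,1) _ assms(3,4)] by blast
  moreover have "C' \<inter> P = {}" using C_def(1) sub by blast
  ultimately show "C' \<in> tail_family G \<rho> a P"
    using C_def(3) G(1) unfolding tail_family_def by simp
qed

lemma ranked_tail_family:
  assumes "Well_order s" "ranked s G \<rho>" "\<forall>x\<in>Field s. (x, a) \<in> s"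
  shows "ranked (Restr s (underS s a)) (tail_family G \<rho> a P) (\<lambda>C. (\<rho> (P \<union> C))(a := 0))"
  unfolding ranked_def
proof (intro ballI impI)
  fix C C' assume C: "C \<in> tail_family G \<rho> a P" and C': "C' \<in> tail_family G \<rho> a P"
    and sub: "C \<subset> C'"
  then have "P \<union> C \<subset> P \<union> C'" "P \<union> C \<in> G" "P \<union> C' \<in> G"
    and "\<rho> (P \<union> C') a = \<rho> (P \<union> C) a"
    unfolding tail_family_def by auto
  then show "omega_pow_less (Restr s (underS s a)) ((\<rho> (P \<union> C'))(a := 0)) ((\<rho> (P \<union> C))(a := 0))"
    using omega_pow_less_drop_greatest[OF assms(1) _ _ assms(3)] assms(2) unfolding ranked_def
    by blast
qed

lemma ranked_Restr_underS:
  assumes ws: "Well_order s" and "hereditary G" and rk: "ranked s G \<rho>"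
    and empty: "\<forall>x. \<rho> {} x \<noteq> 0 \<longrightarrow> (x, a) \<in> s" and ab: "a \<in> underS s b"
  shows "ranked (Restr s (underS s b)) G \<rho>"
proof -
  have support: "\<forall>x. \<rho> C x \<noteq> 0 \<longrightarrow> (x, a) \<in> s" if C: "C \<in> G" for C
  proof (cases "C = {}")
    case False
    have "{} \<in> G" using assms(2) C unfolding hereditary_def by blast
    then have "omega_pow_less s (\<rho> C) (\<rho> {})" using rk C False unfolding ranked_def by blast
    then show ?thesis using omega_pow_less_support_below[OF ws _ empty] by blast
  qed (use empty in simp)
  have "x \<in> underS s b" if "(x, a) \<in> s" for x
  proof -
    have "(a, b) \<in> s" "a \<noteq> b" using ab unfolding underS_def by auto
    then show ?thesis
      using that Well_order_trans[OF ws] Well_order_antisym[OF ws] unfolding underS_def by blast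
  qed
  with support have "\<forall>x. \<rho> C x \<noteq> 0 \<longrightarrow> x \<in> underS s b" if "C \<in> G" for C
    using that by blast
  then show ?thesis
    using omega_pow_less_Restr_underS[OF ws] rk unfolding ranked_def by blast
qed

lemma Well_order_finite_bounded:
  assumes ws: "Well_order s" and "Field s \<noteq> {}" "finite X" "X \<subseteq> Field s"
  shows "\<exists>a\<in>Field s. \<forall>x\<in>X. (x, a) \<in> s"
  using assms(3,4)
proof (induction X rule: finite_induct)
  case empty
  then show ?case using assms(2) by blast
next
  case (insert x X)
  then obtain a where a: "a \<in> Field s" "\<forall>y\<in>X. (y, a) \<in> s" by blast
  have x: "x \<in> Field s" using insert(4) by blast
  show ?case
  proof (cases "(x, a) \<in> s")
    case False
    then have "(a, x) \<in> s" using Well_order_total[OF ws x a(1)] by blast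
    then show ?thesis using x a(2) Well_order_refl[OF ws x] Well_order_trans[OF ws] by blast
  qed (use a in blast)
qed

text \<open>Finitely many rankings only use coordinates below a bound, so when the ordinal has no
  greatest element they all live in a proper initial segment.\<close>

lemma ranked_families_Restr_underS:
  assumes ws: "Well_order s" and ne: "Field s \<noteq> {}"
    and no_greatest: "\<And>a. a \<in> Field s \<Longrightarrow> \<exists>x\<in>Field s. (x, a) \<notin> s"
    and fin: "finite \<G>" and \<G>: "\<forall>G\<in>\<G>. hereditary G \<and> (\<exists>\<rho>. ranked s G \<rho>)"
  obtains b where "b \<in> Field s" "\<forall>G\<in>\<G>. \<exists>\<rho>. ranked (Restr s (underS s b)) G \<rho>"
proof -
  have "\<forall>G\<in>\<G>. \<exists>\<rho>. ranked s G \<rho>" using \<G> by blast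
  then obtain \<rho> where \<rho>: "\<forall>G\<in>\<G>. ranked s G (\<rho> G)" by (rule bchoice[elim_format]) blast
  define \<G>' where "\<G>' = {G \<in> \<G>. \<exists>A\<in>G. A \<noteq> {}}"
  define X where "X = (\<Union>G\<in>\<G>'. {x. \<rho> G {} x \<noteq> 0})"
  have support: "finite {x. \<rho> G {} x \<noteq> 0} \<and> {x. \<rho> G {} x \<noteq> 0} \<subseteq> Field s" if G: "G \<in> \<G>'" for G
  proof -
    obtain A where "G \<in> \<G>" "A \<in> G" "A \<noteq> {}" using G unfolding \<G>'_def by blast
    moreover have "{} \<in> G" using \<G> \<open>G \<in> \<G>\<close> \<open>A \<in> G\<close> unfolding hereditary_def by blast
    ultimately have less: "omega_pow_less s (\<rho> G A) (\<rho> G {})"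
      using \<rho> unfolding ranked_def by blast
    have "{x. \<rho> G {} x \<noteq> 0} \<subseteq> Field s" using omega_pow_lessD(4)[OF less] by blast
    then show ?thesis using omega_pow_lessD(2)[OF less] by blast
  qed
  have "finite \<G>'" using fin unfolding \<G>'_def by simp
  then have "finite X" "X \<subseteq> Field s" using support unfolding X_def by auto
  then obtain a where a: "a \<in> Field s" "\<forall>x\<in>X. (x, a) \<in> s"
    using Well_order_finite_bounded[OF ws ne] by blast
  obtain b where b: "b \<in> Field s" "(b, a) \<notin> s" using no_greatest[OF a(1)] by blast
  then have ab: "a \<in> underS s b"
    using Well_order_total[OF ws a(1)] unfolding underS_def by blast
  have "\<exists>\<rho>. ranked (Restr s (underS s b)) G \<rho>" if G: "G \<in> \<G>" for G
  proof (cases "G \<in> \<G>'")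
    case True
    then have "\<forall>x. \<rho> G {} x \<noteq> 0 \<longrightarrow> (x, a) \<in> s" using a(2) unfolding X_def by blast
    then show ?thesis using ranked_Restr_underS[OF ws _ _ _ ab] \<rho> \<G> G by blast
  next
    case False
    then have "G \<subseteq> {{}}" using G unfolding \<G>'_def by blast
    then show ?thesis unfolding ranked_def by blast
  qed
  then show thesis using that b(1) by blast
qed

lemma card_drops_le:
  fixes t :: "nat \<Rightarrow> nat"
  assumes "\<And>l. t (Suc l) \<le> t l"
  shows "card {l. l < p \<and> t (Suc l) < t l} + t p \<le> t 0"
proof (induction p)
  case (Suc p)
  have split: "{l. l < Suc p \<and> t (Suc l) < t l} =
      {l. l < p \<and> t (Suc l) < t l} \<union> (if t (Suc p) < t p then {p} else {})"
    by (auto simp: less_Suc_eq)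
  show ?case
  proof (cases "t (Suc p) < t p")
    case True
    then show ?thesis using Suc.IH unfolding split by simp
  next
    case False
    then show ?thesis using Suc.IH assms[of p] unfolding split by simp
  qed
qed simp

lemma sum_le_by_drops:
  fixes t :: "nat \<Rightarrow> nat" and v :: "nat \<Rightarrow> real" and \<epsilon> :: real
  assumes "\<And>l. t (Suc l) \<le> t l" "0 \<le> \<epsilon>"
    and "\<And>l. l < p \<Longrightarrow> t (Suc l) = t l \<Longrightarrow> v l \<le> \<epsilon>" "\<And>l. l < p \<Longrightarrow> v l \<le> 1"
  shows "(\<Sum>l<p. v l) \<le> p * \<epsilon> + t 0"
proof -
  have "v l \<le> \<epsilon> + (if t (Suc l) < t l then 1 else 0)" if "l < p" for l
    using assms(1)[of l] assms(2) assms(3,4)[OF that] by (auto simp: le_less)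
  then have "(\<Sum>l<p. v l) \<le> (\<Sum>l<p. \<epsilon> + (if t (Suc l) < t l then 1 else 0))"
    by (rule sum_mono) simp
  also have "\<dots> = p * \<epsilon> + card {l. l < p \<and> t (Suc l) < t l}"
    by (simp add: sum.distrib sum.If_cases Int_def conj_commute)
  also have "\<dots> \<le> p * \<epsilon> + t 0" using card_drops_le[of t p] assms(1) by simp
  finally show ?thesis .
qed

section \<open>Small averages on Schreier sets\<close>

definition convex_weights :: "nat set \<Rightarrow> (nat \<Rightarrow> real) \<Rightarrow> bool" where
  "convex_weights E a \<longleftrightarrow> finite E \<and> E \<noteq> {} \<and> (\<forall>i\<in>E. 0 \<le> a i) \<and> sum a E = 1"

text \<open>A ranking of G in s, a map into the Cantor normal forms below \<open>\<omega>\<^sup>s\<close> strictly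
  decreasing along proper inclusion, is the form in which the bound \<open>CB(G) < \<omega>\<^sup>s\<close> is used
  (see CB_less_imp_ranked).\<close>

definition small_averages :: "(nat rel \<Rightarrow> nat set set) \<Rightarrow> nat rel \<Rightarrow> bool" where
  "small_averages S r \<longleftrightarrow> (\<forall>(s :: nat rel) (\<G> :: nat set set set) (m :: nat) (\<epsilon> :: real).
     s \<le>o r \<longrightarrow> finite \<G> \<longrightarrow> 0 < \<epsilon> \<longrightarrow> (\<forall>G\<in>\<G>. hereditary G \<and> (\<exists>\<rho>. ranked s G \<rho>)) \<longrightarrow>
     (\<exists>E a. E \<in> S r \<and> E \<subseteq> {m<..} \<and> convex_weights E a \<and>
        (\<forall>G\<in>\<G>. \<forall>A\<in>G. A \<subseteq> E \<longrightarrow> sum a A < \<epsilon>)))"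

lemma small_averagesD:
  fixes s :: "nat rel" and \<G> :: "nat set set set"
  assumes "small_averages S r" "s \<le>o r" "finite \<G>" "0 < \<epsilon>"
    "\<forall>G\<in>\<G>. hereditary G \<and> (\<exists>\<rho>. ranked s G \<rho>)"
  obtains E a where "E \<in> S r" "E \<subseteq> {m<..}" "convex_weights E a"
    "\<forall>G\<in>\<G>. \<forall>A\<in>G. A \<subseteq> E \<longrightarrow> sum a A < \<epsilon>"
  using assms(1)[unfolded small_averages_def, rule_format (no_asm), of s \<G> \<epsilon> m, OF assms(2-5)]
    that by blast

lemma small_averagesI:
  assumes "\<And>(s :: nat rel) (\<G> :: nat set set set) (m :: nat) (\<epsilon> :: real).
    s \<le>o r \<Longrightarrow> finite \<G> \<Longrightarrow> 0 < \<epsilon> \<Longrightarrow> \<forall>G\<in>\<G>. hereditary G \<and> (\<exists>\<rho>. ranked s G \<rho>) \<Longrightarrow>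
    \<exists>E a. E \<in> S r \<and> E \<subseteq> {m<..} \<and> convex_weights E a \<and>
      (\<forall>G\<in>\<G>. \<forall>A\<in>G. A \<subseteq> E \<longrightarrow> sum a A < \<epsilon>)"
  shows "small_averages S r"
  using assms unfolding small_averages_def by blast

lemma small_averages_zero:
  assumes "is_zero_ord r" "S r = schreier0"
  shows "small_averages S r"
proof (rule small_averagesI)
  fix s :: "nat rel" and \<G> :: "nat set set set" and m :: nat and \<epsilon> :: real
  assume "s \<le>o r" "0 < \<epsilon>" and \<G>: "\<forall>G\<in>\<G>. hereditary G \<and> (\<exists>\<rho>. ranked s G \<rho>)"
  have "Field s = {}"
    using ordLeq_Field_empty[OF \<open>s \<le>o r\<close>] assms(1) unfolding is_zero_ord_def by blast
  have "A = {}" if G: "G \<in> \<G>" "A \<in> G" for G A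
  proof -
    obtain \<rho> where "ranked s G \<rho>" using \<G> G(1) by blast
    then show ?thesis using ranked_Field_empty \<G> G \<open>Field s = {}\<close> by blast
  qed
  moreover have "{Suc m} \<in> S r" unfolding assms(2) schreier0_def by auto
  moreover have "convex_weights {Suc m} (\<lambda>_. 1)" unfolding convex_weights_def by simp
  moreover have "\<forall>G\<in>\<G>. \<forall>A\<in>G. A \<subseteq> {Suc m} \<longrightarrow> sum (\<lambda>_. 1) A < \<epsilon>"
  proof (intro ballI impI)
    fix G A assume "G \<in> \<G>" "A \<in> G"
    then have "A = {}" by fact
    then show "sum (\<lambda>_. 1) A < \<epsilon>" using \<open>0 < \<epsilon>\<close> by simp
  qed
  ultimately show "\<exists>E a. E \<in> S r \<and> E \<subseteq> {m<..} \<and> convex_weights E a \<and>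
      (\<forall>G\<in>\<G>. \<forall>A\<in>G. A \<subseteq> E \<longrightarrow> sum a A < \<epsilon>)"
    by (intro exI[of _ "{Suc m}"] exI[of _ "\<lambda>_. 1"]) simp
qed

lemma single_block_in_fam_prod:
  assumes "E \<in> G" "finite E" "E \<noteq> {}" "E \<subseteq> {1..}"
  shows "E \<in> fam_prod schreier1 G"
proof -
  have "Min E \<in> E" using assms(2,3) by simp
  then have "{Min E} \<in> schreier1" using assms(4) unfolding schreier1_def by auto
  moreover have "(\<lambda>i. Min E) ` {..<1::nat} = {Min E}" by auto
  ultimately have "(\<lambda>i. Min E) ` {..<1::nat} \<in> schreier1" by simp
  then show ?thesis
    using assms(1,3) unfolding fam_prod_def by (intro UnI2 CollectI exI[of _ 1] exI[of _ "\<lambda>i. E"]) auto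
qed

lemma successive_blocks_in_fam_prod:
  assumes blocks: "\<And>l. l < p \<Longrightarrow> El l \<in> G \<and> El l \<noteq> {}"
    and ranges: "\<And>l. El l \<subseteq> {Ms l<..Ms (Suc l)}" and "mono Ms" and "p \<le> Ms 0"
  shows "(\<Union>l<p. El l) \<in> fam_prod schreier1 G"
proof -
  have fin: "finite (El l)" for l using ranges[of l] finite_subset by blast
  have Min_gt: "Ms l < Min (El l)" if "l < p" for l
    using blocks[OF that] fin ranges[of l] Min_in by fastforce
  have Max_le: "Max (El l) \<le> Ms (Suc l)" if "l < p" for l
    using blocks[OF that] fin ranges[of l] Max_in by fastforce
  have sep: "Max (El i) < Min (El j)" if "i < j" "j < p" for i j
  proof -
    have "Ms (Suc i) \<le> Ms j" using \<open>mono Ms\<close> that(1) by (simp add: monoD)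
    then show ?thesis using Max_le[of i] Min_gt[of j] that by simp
  qed
  define Mins where "Mins = (\<lambda>l. Min (El l)) ` {..<p}"
  have "Mins \<in> schreier1"
  proof (cases "p = 0")
    case False
    have "card Mins \<le> p" unfolding Mins_def using card_image_le by fastforce
    moreover have "p < x" if x: "x \<in> Mins" for x
    proof -
      obtain l where "l < p" "x = Min (El l)" using x unfolding Mins_def by blast
      moreover have "Ms 0 \<le> Ms l" using monoD[OF \<open>mono Ms\<close>] by simp
      ultimately show ?thesis using Min_gt[of l] \<open>p \<le> Ms 0\<close> by simp
    qed
    moreover have "finite Mins" "Mins \<noteq> {}" using False unfolding Mins_def by auto
    moreover from this have "Min Mins \<in> Mins" by (rule Min_in)
    ultimately have "card Mins \<le> Min Mins" "Mins \<subseteq> {1..}" by fastforce+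
    with \<open>finite Mins\<close> \<open>Mins \<noteq> {}\<close> show ?thesis unfolding schreier1_def by blast
  qed (simp add: Mins_def schreier1_def)
  then show ?thesis
    using blocks sep unfolding fam_prod_def Mins_def
    by (intro UnI2 CollectI exI[of _ p] exI[of _ El]) auto
qed

lemma successive_blocks_above:
  assumes "\<And>l. El l \<subseteq> {Ms l<..Ms (Suc l)}" "mono Ms"
  shows "(\<Union>l<p. El l) \<subseteq> {Ms 0<..}"
proof
  fix x assume "x \<in> (\<Union>l<p. El l)"
  then obtain l where "x \<in> El l" by blast
  then have "Ms l < x" using assms(1)[of l] by auto
  then show "x \<in> {Ms 0<..}" using monoD[OF assms(2), of 0 l] by simp
qed

lemma sum_average_of_blocks:
  fixes al :: "nat \<Rightarrow> nat \<Rightarrow> real"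
  assumes "finite A"
  shows "sum (\<lambda>i. \<Sum>l<p. if i \<in> El l then al l i / p else 0) A = (\<Sum>l<p. sum (al l) (A \<inter> El l)) / p"
proof -
  have "sum (\<lambda>i. \<Sum>l<p. if i \<in> El l then al l i / p else 0) A
      = (\<Sum>l<p. \<Sum>i\<in>A. if i \<in> El l then al l i / p else 0)" by (rule sum.swap)
  also have "\<dots> = (\<Sum>l<p. sum (al l) (A \<inter> El l) / p)"
  proof (rule sum.cong[OF refl])
    fix l
    have "(\<Sum>i\<in>A. if i \<in> El l then al l i / p else 0) = (\<Sum>i\<in>A \<inter> El l. al l i / p)"
      by (simp add: sum.inter_restrict[OF assms])
    then show "(\<Sum>i\<in>A. if i \<in> El l then al l i / p else 0) = sum (al l) (A \<inter> El l) / p"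
      by (simp add: sum_divide_distrib)
  qed
  finally show ?thesis by (simp add: sum_divide_distrib)
qed

lemma convex_weights_average_of_blocks:
  fixes al :: "nat \<Rightarrow> nat \<Rightarrow> real"
  assumes "0 < p" "\<And>l. l < p \<Longrightarrow> convex_weights (El l) (al l)"
  shows "convex_weights (\<Union>l<p. El l) (\<lambda>i. \<Sum>l<p. if i \<in> El l then al l i / p else 0)"
proof -
  have fin: "finite (\<Union>l<p. El l)" using assms(2) unfolding convex_weights_def by blast
  have "(\<Union>l<p. El l) \<inter> El l = El l" if "l < p" for l using that by blast
  then have "(\<Sum>l<p. sum (al l) ((\<Union>l<p. El l) \<inter> El l)) = (\<Sum>l<p. 1::real)"
    using assms(2) unfolding convex_weights_def by (intro sum.cong) simp_all
  then have "sum (\<lambda>i. \<Sum>l<p. if i \<in> El l then al l i / p else 0) (\<Union>l<p. El l) = 1"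
    using assms(1) by (simp add: sum_average_of_blocks[OF fin])
  moreover have "El 0 \<noteq> {}" using assms unfolding convex_weights_def by blast
  ultimately show ?thesis
    using fin assms unfolding convex_weights_def by (auto intro!: sum_nonneg)
qed

lemma successive_sets_choice:
  fixes m :: nat and P :: "nat \<Rightarrow> nat set \<Rightarrow> 'b \<Rightarrow> bool"
  assumes "\<And>M. \<exists>E b. P M E b \<and> finite E \<and> E \<noteq> {} \<and> E \<subseteq> {M<..}"
  obtains Ms El al where "Ms 0 = m" "\<And>l. P (Ms l) (El l) (al l)" "\<And>l. El l \<noteq> {}"
    "\<And>l. El l \<subseteq> {Ms l<..Ms (Suc l)}" "strict_mono Ms"
proof -
  obtain nxt b where nxt: "\<And>M. P M (nxt M) (b M) \<and> finite (nxt M) \<and> nxt M \<noteq> {} \<and> nxt M \<subseteq> {M<..}"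
    using assms by metis
  define Ms where "Ms = rec_nat m (\<lambda>_ M. Max (nxt M))"
  have Ms_Suc: "Ms (Suc l) = Max (nxt (Ms l))" for l unfolding Ms_def by simp
  have ranges: "nxt (Ms l) \<subseteq> {Ms l<..Ms (Suc l)}" for l
    using nxt[of "Ms l"] unfolding Ms_Suc by auto
  moreover have "Ms l < Ms (Suc l)" for l
    using nxt[of "Ms l"] Max_in unfolding Ms_Suc by fastforce
  ultimately show thesis
    using that[of Ms "\<lambda>l. nxt (Ms l)" "\<lambda>l. b (Ms l)"] nxt by (simp add: Ms_def strict_mono_Suc_iff)
qed

lemma successive_blocks_initial_parts:
  assumes A: "A \<subseteq> (\<Union>l<p. El l)" and ranges: "\<And>l. El l \<subseteq> {Ms l<..Ms (Suc l)}" and "mono Ms"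
  shows "A \<inter> {..Ms 0} = {}"
    and "l < p \<Longrightarrow> A \<inter> {..Ms (Suc l)} = (A \<inter> {..Ms l}) \<union> (A \<inter> El l)"
proof -
  have block_of: "\<exists>l<p. Ms l < x \<and> x \<le> Ms (Suc l) \<and> x \<in> El l" if "x \<in> A" for x
    using A ranges that by fastforce
  have "x \<notin> A \<inter> {..Ms 0}" for x
  proof
    assume "x \<in> A \<inter> {..Ms 0}"
    then obtain l where "Ms l < x" "x \<le> Ms 0" using block_of by auto
    moreover have "Ms 0 \<le> Ms l" using monoD[OF \<open>mono Ms\<close>] by simp
    ultimately show False by simp
  qed
  then show "A \<inter> {..Ms 0} = {}" by blast
  assume "l < p"
  show "A \<inter> {..Ms (Suc l)} = (A \<inter> {..Ms l}) \<union> (A \<inter> El l)"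
  proof
    show "A \<inter> {..Ms (Suc l)} \<subseteq> (A \<inter> {..Ms l}) \<union> (A \<inter> El l)"
    proof
      fix x assume x: "x \<in> A \<inter> {..Ms (Suc l)}"
      show "x \<in> (A \<inter> {..Ms l}) \<union> (A \<inter> El l)"
      proof (cases "x \<le> Ms l")
        case False
        obtain l' where l': "Ms l' < x" "x \<le> Ms (Suc l')" "x \<in> El l'" using block_of x by blast
        have "\<not> l' < l" using l'(2) False monoD[OF \<open>mono Ms\<close>, of "Suc l'" l] by fastforce
        moreover have "\<not> l < l'" using l'(1) x monoD[OF \<open>mono Ms\<close>, of "Suc l" l'] by fastforce
        ultimately show ?thesis using l'(3) x by simp
      qed (use x in auto)
    qed
    show "(A \<inter> {..Ms l}) \<union> (A \<inter> El l) \<subseteq> A \<inter> {..Ms (Suc l)}"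
      using monoD[OF \<open>mono Ms\<close>, of l "Suc l"] ranges[of l] by auto
  qed
qed

text \<open>The top coordinate of the rank of the initial parts of A can only drop at most
  \<open>\<rho> {} a\<close> times; on every block where it does not drop, the part of A lies in a tail
  family.\<close>

lemma mass_le_by_rank_drops:
  fixes v :: "nat \<Rightarrow> real" and \<epsilon> :: real
  assumes her: "hereditary G" and rk: "ranked s G \<rho>"
    and a: "a \<in> Field s" "\<forall>x\<in>Field s. (x, a) \<in> s"
    and A: "A \<in> G" "A \<subseteq> (\<Union>l<p. El l)"
    and ranges: "\<And>l. El l \<subseteq> {Ms l<..Ms (Suc l)}" and "mono Ms" and "0 \<le> \<epsilon>"
    and tail_small: "\<And>l. l < p \<Longrightarrow> A \<inter> El l \<in> tail_family G \<rho> a (A \<inter> {..Ms l}) \<Longrightarrow> v l \<le> \<epsilon>"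
    and le_one: "\<And>l. l < p \<Longrightarrow> v l \<le> 1"
  shows "(\<Sum>l<p. v l) \<le> p * \<epsilon> + \<rho> {} a"
proof -
  define P where "P l = A \<inter> {..Ms l}" for l
  have PG: "P l \<in> G" for l using her A(1) unfolding P_def hereditary_def by blast
  have Pmono: "P l \<subseteq> P (Suc l)" for l
    using monoD[OF \<open>mono Ms\<close>, of l "Suc l"] unfolding P_def by auto
  note parts = successive_blocks_initial_parts[OF A(2) ranges \<open>mono Ms\<close>, folded P_def]
  have disjoint: "(A \<inter> El l) \<inter> P l = {}" for l using ranges[of l] unfolding P_def by fastforce
  define t where "t l = \<rho> (P l) a" for l
  have t_mono: "t (Suc l) \<le> t l" for l
    unfolding t_def using ranked_greatest_antimono[OF rk PG PG Pmono a] .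
  have no_drop: "v l \<le> \<epsilon>" if "l < p" "t (Suc l) = t l" for l
  proof (rule tail_small[OF \<open>l < p\<close>])
    show "A \<inter> El l \<in> tail_family G \<rho> a (A \<inter> {..Ms l})"
      using that disjoint[of l] PG[of "Suc l"] parts(2)[OF \<open>l < p\<close>]
      unfolding tail_family_def t_def P_def[symmetric] by (simp add: Un_commute)
  qed
  have "(\<Sum>l<p. v l) \<le> p * \<epsilon> + t 0"
  proof (rule sum_le_by_drops)
    show "t (Suc l) \<le> t l" for l by (rule t_mono)
    show "v l \<le> \<epsilon>" if "l < p" "t (Suc l) = t l" for l using no_drop that .
    show "v l \<le> 1" if "l < p" for l using le_one that .
  qed fact
  then show ?thesis unfolding t_def parts(1) .
qed

lemma average_of_tail_small_blocks_le:
  fixes al :: "nat \<Rightarrow> nat \<Rightarrow> real" and \<epsilon> :: real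
  assumes "hereditary G" "ranked s G \<rho>" "a \<in> Field s" "\<forall>x\<in>Field s. (x, a) \<in> s"
    and A: "A \<in> G" "A \<subseteq> (\<Union>l<p. El l)"
    and ranges: "\<And>l. El l \<subseteq> {Ms l<..Ms (Suc l)}" and "mono Ms" and "0 < p" "0 \<le> \<epsilon>"
    and convex: "\<And>l. l < p \<Longrightarrow> convex_weights (El l) (al l)"
    and tail_small: "\<And>l P B. l < p \<Longrightarrow> P \<subseteq> {..Ms l} \<Longrightarrow> B \<in> tail_family G \<rho> a P \<Longrightarrow> B \<subseteq> El l \<Longrightarrow>
      sum (al l) B < \<epsilon>"
  shows "sum (\<lambda>i. \<Sum>l<p. if i \<in> El l then al l i / p else 0) A \<le> \<epsilon> + \<rho> {} a / p"
proof -
  have "finite (\<Union>l<p. El l)" using convex unfolding convex_weights_def by blast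
  then have "finite A" using A(2) by (rule finite_subset[rotated])
  have "(\<Sum>l<p. sum (al l) (A \<inter> El l)) \<le> p * \<epsilon> + \<rho> {} a"
  proof (rule mass_le_by_rank_drops[OF assms(1-4) A ranges \<open>mono Ms\<close> \<open>0 \<le> \<epsilon>\<close>])
    fix l assume "l < p"
    show "sum (al l) (A \<inter> El l) \<le> \<epsilon>" if "A \<inter> El l \<in> tail_family G \<rho> a (A \<inter> {..Ms l})"
      using tail_small[OF \<open>l < p\<close> _ that] by fastforce
    have "sum (al l) (A \<inter> El l) \<le> sum (al l) (El l)"
      using convex[OF \<open>l < p\<close>] unfolding convex_weights_def by (intro sum_mono2) auto
    then show "sum (al l) (A \<inter> El l) \<le> 1" using convex[OF \<open>l < p\<close>] unfolding convex_weights_def by simp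
  qed
  then have "(\<Sum>l<p. sum (al l) (A \<inter> El l)) / p \<le> (p * \<epsilon> + \<rho> {} a) / p"
    by (simp add: divide_right_mono)
  also have "\<dots> = \<epsilon> + \<rho> {} a / p" using \<open>0 < p\<close> by (simp add: add_divide_distrib)
  finally show ?thesis using sum_average_of_blocks[OF \<open>finite A\<close>] by simp
qed

lemma small_averages_tail_families:
  fixes s z :: "nat rel" and \<G> :: "nat set set set" and \<epsilon> :: real
  assumes ws: "Well_order s" and a: "a \<in> Field s" "\<forall>x\<in>Field s. (x, a) \<in> s"
    and small: "small_averages S z" and below: "Restr s (underS s a) \<le>o z"
    and fin: "finite \<G>" and "0 < \<epsilon>" and \<G>: "\<forall>G\<in>\<G>. hereditary G \<and> ranked s G (\<rho> G)"
  shows "\<exists>E b. (E \<in> S z \<and> convex_weights E b \<and>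
      (\<forall>G\<in>\<G>. \<forall>P B. P \<subseteq> {..M} \<longrightarrow> B \<in> tail_family G (\<rho> G) a P \<longrightarrow> B \<subseteq> E \<longrightarrow> sum b B < \<epsilon>))
      \<and> finite E \<and> E \<noteq> {} \<and> E \<subseteq> {M<..}"
proof -
  define tails where "tails = (\<lambda>(G, P). tail_family G (\<rho> G) a P) ` (\<G> \<times> Pow {..M})"
  have "finite tails" unfolding tails_def using fin by simp
  moreover have "\<forall>H\<in>tails. hereditary H \<and> (\<exists>\<rho>. ranked (Restr s (underS s a)) H \<rho>)"
    using hereditary_tail_family[OF _ _ a] ranked_tail_family[OF ws _ a(2)] \<G>
    unfolding tails_def by fastforce
  ultimately obtain E b where "E \<in> S z" "E \<subseteq> {M<..}" "convex_weights E b"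
    "\<forall>H\<in>tails. \<forall>B\<in>H. B \<subseteq> E \<longrightarrow> sum b B < \<epsilon>"
    using small_averagesD[OF small below] \<open>0 < \<epsilon>\<close> by metis
  moreover have "tail_family G (\<rho> G) a P \<in> tails" if "G \<in> \<G>" "P \<subseteq> {..M}" for G P
    unfolding tails_def using that by blast
  ultimately show ?thesis unfolding convex_weights_def by blast
qed

text \<open>At a successor the average is taken over p successive S(z)-averages. The top coordinate of
  a rank drops on at most C of them, so choosing \<open>p > 2 C / \<epsilon>\<close> makes those blocks carry
  mass below \<open>\<epsilon> / 2\<close>.\<close>

lemma small_averages_succ_greatest:
  fixes s z :: "nat rel" and \<G> :: "nat set set set" and \<epsilon> :: real
  assumes ws: "Well_order s" and a: "a \<in> Field s" "\<forall>x\<in>Field s. (x, a) \<in> s"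
    and small: "small_averages S z" and below: "Restr s (underS s a) \<le>o z"
    and fin: "finite \<G>" and "0 < \<epsilon>" and \<G>: "\<forall>G\<in>\<G>. hereditary G \<and> (\<exists>\<rho>. ranked s G \<rho>)"
  obtains E w where "E \<in> fam_prod schreier1 (S z)" "E \<subseteq> {m<..}" "convex_weights E w"
    "\<forall>G\<in>\<G>. \<forall>A\<in>G. A \<subseteq> E \<longrightarrow> sum w A < \<epsilon>"
proof -
  have "\<forall>G\<in>\<G>. \<exists>\<rho>. ranked s G \<rho>" using \<G> by blast
  then obtain \<rho> where \<rho>: "\<forall>G\<in>\<G>. ranked s G (\<rho> G)" by (rule bchoice[elim_format]) blast
  have \<G>\<rho>: "\<forall>G\<in>\<G>. hereditary G \<and> ranked s G (\<rho> G)" using \<G> \<rho> by blast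
  define C where "C = Max (insert 0 ((\<lambda>G. \<rho> G {} a) ` \<G>))"
  have C: "\<rho> G {} a \<le> C" if "G \<in> \<G>" for G unfolding C_def using fin that by simp
  define p where "p = nat \<lceil>2 * C / \<epsilon>\<rceil> + 1"
  have "0 < p" unfolding p_def by simp
  have "2 * C / \<epsilon> < p" unfolding p_def by linarith
  then have p_large: "C / p < \<epsilon> / 2" using \<open>0 < p\<close> \<open>0 < \<epsilon>\<close> by (simp add: field_simps)
  have next_block: "\<exists>E b. (E \<in> S z \<and> convex_weights E b \<and> (\<forall>G\<in>\<G>. \<forall>P B. P \<subseteq> {..M} \<longrightarrow>
      B \<in> tail_family G (\<rho> G) a P \<longrightarrow> B \<subseteq> E \<longrightarrow> sum b B < \<epsilon> / 2)) \<and> finite E \<and> E \<noteq> {} \<and> E \<subseteq> {M<..}"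
    for M by (rule small_averages_tail_families[OF ws a small below fin _ \<G>\<rho>]) (use \<open>0 < \<epsilon>\<close> in simp)
  obtain Ms El al where Ms0: "Ms 0 = max m p"
    and El_P: "\<And>l. El l \<in> S z \<and> convex_weights (El l) (al l) \<and> (\<forall>G\<in>\<G>. \<forall>P B. P \<subseteq> {..Ms l} \<longrightarrow>
      B \<in> tail_family G (\<rho> G) a P \<longrightarrow> B \<subseteq> El l \<longrightarrow> sum (al l) B < \<epsilon> / 2)"
    and El_ne: "\<And>l. El l \<noteq> {}" and ranges: "\<And>l. El l \<subseteq> {Ms l<..Ms (Suc l)}"
    and "strict_mono Ms"
    by (rule successive_sets_choice[where m = "max m p", OF next_block]) (rule that)
  have "mono Ms" using \<open>strict_mono Ms\<close> strict_mono_mono by blast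
  define E where "E = (\<Union>l<p. El l)"
  define w where "w i = (\<Sum>l<p. if i \<in> El l then al l i / p else 0)" for i
  show thesis
  proof (rule that)
    show "E \<in> fam_prod schreier1 (S z)"
      unfolding E_def
      by (rule successive_blocks_in_fam_prod) (use El_P El_ne ranges \<open>mono Ms\<close> Ms0 in auto)
    show "E \<subseteq> {m<..}"
      using successive_blocks_above[OF ranges \<open>mono Ms\<close>, of p] Ms0 unfolding E_def by auto
    show "convex_weights E w"
      unfolding E_def w_def using convex_weights_average_of_blocks[OF \<open>0 < p\<close>] El_P by blast
    show "\<forall>G\<in>\<G>. \<forall>A\<in>G. A \<subseteq> E \<longrightarrow> sum w A < \<epsilon>"
    proof (intro ballI impI)
      fix G A assume G: "G \<in> \<G>" and A: "A \<in> G" "A \<subseteq> E"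
      have "sum w A \<le> \<epsilon> / 2 + \<rho> G {} a / p"
        unfolding w_def
      proof (rule average_of_tail_small_blocks_le[OF _ _ a A(1) _ ranges \<open>mono Ms\<close> \<open>0 < p\<close>])
        show "hereditary G" "ranked s G (\<rho> G)" using G \<G>\<rho> by blast+
      qed (use A(2) \<open>0 < \<epsilon>\<close> El_P G in \<open>auto simp: E_def\<close>)
      also have "\<dots> \<le> \<epsilon> / 2 + C / p" using C[OF G] \<open>0 < p\<close> by (simp add: divide_right_mono)
      also have "\<dots> < \<epsilon>" using p_large by linarith
      finally show "sum w A < \<epsilon>" .
    qed
  qed
qed

lemma small_averages_succ:
  assumes succ: "is_succ_of z r" and Sr: "S r = fam_prod schreier1 (S z)"
    and small: "small_averages S z"
  shows "small_averages S r"
proof (rule small_averagesI)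
  fix s :: "nat rel" and \<G> :: "nat set set set" and m :: nat and \<epsilon> :: real
  assume sr: "s \<le>o r" and fin: "finite \<G>" and "0 < \<epsilon>"
    and \<G>: "\<forall>G\<in>\<G>. hereditary G \<and> (\<exists>\<rho>. ranked s G \<rho>)"
  show "\<exists>E a. E \<in> S r \<and> E \<subseteq> {m<..} \<and> convex_weights E a \<and>
      (\<forall>G\<in>\<G>. \<forall>A\<in>G. A \<subseteq> E \<longrightarrow> sum a A < \<epsilon>)"
  proof (cases "s <o r")
    case True
    then have "s \<le>o z"
      using is_succ_ofD(1,4)[OF succ] sr ordLess_or_ordLeq ordLeq_Well_order_simp by blast
    then obtain E a where E: "E \<in> S z" "E \<subseteq> {m<..}" "convex_weights E a"
      "\<forall>G\<in>\<G>. \<forall>A\<in>G. A \<subseteq> E \<longrightarrow> sum a A < \<epsilon>"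
      using small_averagesD[OF small _ fin \<open>0 < \<epsilon>\<close> \<G>] by blast
    moreover have "finite E" "E \<noteq> {}" using E(3) unfolding convex_weights_def by auto
    moreover have "E \<subseteq> {1..}" using E(2) by auto
    ultimately have "E \<in> S r" unfolding Sr using single_block_in_fam_prod by blast
    then show ?thesis using E by blast
  next
    case False
    then have "s =o r" using sr ordLeq_iff_ordLess_or_ordIso by blast
    then have "is_succ_of z s" using is_succ_of_ordIso[OF succ] ordIso_symmetric by blast
    then obtain a where "a \<in> Field s" "\<forall>x\<in>Field s. (x, a) \<in> s" "z =o Restr s (underS s a)"
      by (rule is_succ_of_imp_greatest)
    then show ?thesis
      using small_averages_succ_greatest[OF _ _ _ small _ fin \<open>0 < \<epsilon>\<close> \<G>, of a m] Sr
        ordLeq_Well_order_simp[OF sr] ordIso_imp_ordLeq ordIso_symmetric by metis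
  qed
qed

lemma schreier_system_zero:
  assumes "schreier_system S" "is_zero_ord r"
  shows "S r = schreier0"
proof -
  have "\<forall>r. is_zero_ord r \<longrightarrow> S r = schreier0"
    using assms(1) unfolding schreier_system_def by (elim conjE)
  then show ?thesis using assms(2) by simp
qed

lemma schreier_system_succ:
  assumes "schreier_system S" "is_succ_of z r"
  shows "S r = fam_prod schreier1 (S z)"
proof -
  have "\<forall>z r. is_succ_of z r \<longrightarrow> S r = fam_prod schreier1 (S z)"
    using assms(1) unfolding schreier_system_def by (elim conjE)
  then show ?thesis using assms(2) by simp
qed

lemma schreier_system_limitE:
  assumes "schreier_system S" "is_limit_ord r"
  obtains \<xi>s \<sigma>s :: "nat \<Rightarrow> nat rel"
  where "\<And>n. 1 \<le> n \<Longrightarrow> \<xi>s n <o r" "\<And>n. 1 \<le> n \<Longrightarrow> is_succ_of (\<xi>s n) (\<sigma>s n)"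
    "\<And>\<zeta> :: nat rel. \<zeta> <o r \<Longrightarrow> \<exists>n\<ge>1. \<zeta> <o \<xi>s n"
    "\<And>n. 1 \<le> n \<Longrightarrow> S (\<sigma>s n) \<subseteq> S (\<xi>s (Suc n))"
    "S r = {{}} \<union> {E. E \<noteq> {} \<and> E \<in> S (\<sigma>s (Min E))}"
proof -
  have "\<forall>r. is_limit_ord r \<longrightarrow> (\<exists>\<xi>s \<sigma>s :: nat \<Rightarrow> nat rel.
           (\<forall>n\<ge>1. \<xi>s n <o r \<and> is_succ_of (\<xi>s n) (\<sigma>s n)) \<and>
           (\<forall>n\<ge>1. \<xi>s n <o \<xi>s (Suc n)) \<and>
           (\<forall>\<zeta> :: nat rel. \<zeta> <o r \<longrightarrow> (\<exists>n\<ge>1. \<zeta> <o \<xi>s n)) \<and>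
           (\<forall>n\<ge>1. S (\<sigma>s n) \<subseteq> S (\<xi>s (Suc n))) \<and>
           S r = {{}} \<union> {E. E \<noteq> {} \<and> E \<in> S (\<sigma>s (Min E))})"
    using assms(1) unfolding schreier_system_def by (elim conjE)
  from this[THEN spec[of _ r], THEN mp, OF assms(2)]
  obtain \<xi>s \<sigma>s :: "nat \<Rightarrow> nat rel"
    where L: "\<forall>n\<ge>1. \<xi>s n <o r \<and> is_succ_of (\<xi>s n) (\<sigma>s n)"
      "\<forall>\<zeta> :: nat rel. \<zeta> <o r \<longrightarrow> (\<exists>n\<ge>1. \<zeta> <o \<xi>s n)"
      "\<forall>n\<ge>1. S (\<sigma>s n) \<subseteq> S (\<xi>s (Suc n))" "S r = {{}} \<union> {E. E \<noteq> {} \<and> E \<in> S (\<sigma>s (Min E))}"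
    by (elim exE conjE) simp
  show thesis by (rule that) (use L in blast)+
qed

lemma schreier_system_limit_chain:
  assumes sys: "schreier_system S" and succ: "\<And>n. 1 \<le> n \<Longrightarrow> is_succ_of (\<xi>s n) (\<sigma>s n)"
    and inc: "\<And>n. 1 \<le> n \<Longrightarrow> S (\<sigma>s n) \<subseteq> S (\<xi>s (Suc n))"
    and E: "E \<in> S (\<xi>s n)" "finite E" "E \<noteq> {}" "E \<subseteq> {1..}" and "1 \<le> n" "n \<le> k"
  shows "E \<in> S (\<sigma>s k)"
  using \<open>n \<le> k\<close>
proof (induction k rule: dec_induct)
  case base
  then show ?case
    using schreier_system_succ[OF sys succ[OF \<open>1 \<le> n\<close>]] single_block_in_fam_prod E by simp
next
  case (step j)
  then have "E \<in> S (\<xi>s (Suc j))" using inc[of j] \<open>1 \<le> n\<close> by auto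
  then show ?case
    using schreier_system_succ[OF sys succ[of "Suc j"]] single_block_in_fam_prod E by simp
qed

lemma small_averages_limit:
  assumes sys: "schreier_system S" and lim: "is_limit_ord r"
    and IH: "\<And>z :: nat rel. z <o r \<Longrightarrow> small_averages S z"
  shows "small_averages S r"
proof (rule small_averagesI)
  fix s :: "nat rel" and \<G> :: "nat set set set" and m :: nat and \<epsilon> :: real
  assume sr: "s \<le>o r" and fin: "finite \<G>" and "0 < \<epsilon>"
    and \<G>: "\<forall>G\<in>\<G>. hereditary G \<and> (\<exists>\<rho>. ranked s G \<rho>)"
  obtain \<xi>s \<sigma>s :: "nat \<Rightarrow> nat rel" where \<xi>s: "\<And>n. 1 \<le> n \<Longrightarrow> \<xi>s n <o r"
    and succ: "\<And>n. 1 \<le> n \<Longrightarrow> is_succ_of (\<xi>s n) (\<sigma>s n)"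
    and cofinal: "\<And>\<zeta> :: nat rel. \<zeta> <o r \<Longrightarrow> \<exists>n\<ge>1. \<zeta> <o \<xi>s n"
    and inc: "\<And>n. 1 \<le> n \<Longrightarrow> S (\<sigma>s n) \<subseteq> S (\<xi>s (Suc n))"
    and Sr: "S r = {{}} \<union> {E. E \<noteq> {} \<and> E \<in> S (\<sigma>s (Min E))}"
    using schreier_system_limitE[OF sys lim] by blast
  obtain s' where s': "s' <o r" "\<forall>G\<in>\<G>. hereditary G \<and> (\<exists>\<rho>. ranked s' G \<rho>)"
  proof (cases "s <o r")
    case False
    then have "s =o r" using sr ordLeq_iff_ordLess_or_ordIso by blast
    have ws: "Well_order s" using ordLeq_Well_order_simp[OF sr] by blast
    have "Field s \<noteq> {}"
      using lim ordIso_Field_empty[OF \<open>s =o r\<close>] unfolding is_limit_ord_def by blast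
    moreover have "\<exists>x\<in>Field s. (x, a) \<notin> s" if "a \<in> Field s" for a
      using is_limit_ord_no_greatest[OF \<open>s =o r\<close> lim that] by blast
    ultimately obtain b where b: "b \<in> Field s" "\<forall>G\<in>\<G>. \<exists>\<rho>. ranked (Restr s (underS s b)) G \<rho>"
      using ranked_families_Restr_underS[OF ws _ _ fin \<G>] by blast
    have "Restr s (underS s b) <o r"
      using underS_Restr_ordLess[OF ws] b(1) \<open>s =o r\<close> ordLess_ordIso_trans by blast
    then show thesis using that b(2) \<G> by blast
  qed (use \<G> in blast)
  obtain n where n: "1 \<le> n" "s' <o \<xi>s n" using cofinal[OF s'(1)] by blast
  obtain E a where E: "E \<in> S (\<xi>s n)" "E \<subseteq> {max m n<..}" "convex_weights E a"
      "\<forall>G\<in>\<G>. \<forall>A\<in>G. A \<subseteq> E \<longrightarrow> sum a A < \<epsilon>"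
    using small_averagesD[OF IH[OF \<xi>s[OF n(1)]] ordLess_imp_ordLeq[OF n(2)] fin \<open>0 < \<epsilon>\<close> s'(2)]
    by blast
  have fin_E: "finite E" "E \<noteq> {}" using E(3) unfolding convex_weights_def by auto
  have "n \<le> Min E" "E \<subseteq> {1..}" using E(2) Min_in[OF fin_E] n(1) by fastforce+
  then have "E \<in> S (\<sigma>s (Min E))"
    using schreier_system_limit_chain[OF sys succ inc E(1) fin_E _ n(1)] by blast
  then have "E \<in> S r" unfolding Sr using fin_E(2) by blast
  moreover have "E \<subseteq> {m<..}" using E(2) by auto
  ultimately show "\<exists>E a. E \<in> S r \<and> E \<subseteq> {m<..} \<and> convex_weights E a \<and>
      (\<forall>G\<in>\<G>. \<forall>A\<in>G. A \<subseteq> E \<longrightarrow> sum a A < \<epsilon>)"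
    using E(3,4) by blast
qed

theorem small_averages_schreier_system:
  fixes r :: "nat rel"
  assumes sys: "schreier_system S" and "Well_order r"
  shows "small_averages S r"
  using assms(2)
proof (induction r rule: wf_induct[OF wf_ordLess])
  case (1 r)
  have IH: "small_averages S z" if "z <o r" for z :: "nat rel"
    using 1(1) that ordLess_Well_orderD by blast
  from \<open>Well_order r\<close> show ?case
  proof (cases rule: ordinal_cases)
    case 1
    then show ?thesis using small_averages_zero schreier_system_zero[OF sys] by blast
  next
    case (2 z)
    have "small_averages S z" using IH is_succ_ofD(3)[OF 2] by blast
    then show ?thesis using small_averages_succ[OF 2 schreier_system_succ[OF sys 2]] by blast
  next
    case 3
    then show ?thesis using small_averages_limit[OF sys _ IH] by blast
  qed
qed

section \<open>Block norms of averages of unit vectors\<close>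

lemma sum_sqrt_mult_le:
  fixes u v :: "'a \<Rightarrow> real"
  assumes "\<forall>i\<in>T. 0 \<le> u i" "\<forall>i\<in>T. 0 \<le> v i"
  shows "(\<Sum>i\<in>T. sqrt (u i) * sqrt (v i)) \<le> sqrt (sum u T) * sqrt (sum v T)"
proof -
  have "(\<Sum>i\<in>T. sqrt (u i) * sqrt (v i))\<^sup>2 \<le> (\<Sum>i\<in>T. (sqrt (u i))\<^sup>2) * (\<Sum>i\<in>T. (sqrt (v i))\<^sup>2)"
    by (rule Cauchy_Schwarz_ineq_sum)
  also have "(\<Sum>i\<in>T. (sqrt (u i))\<^sup>2) = sum u T" using assms(1) by (intro sum.cong) auto
  also have "(\<Sum>i\<in>T. (sqrt (v i))\<^sup>2) = sum v T" using assms(2) by (intro sum.cong) auto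
  finally have "(\<Sum>i\<in>T. sqrt (u i) * sqrt (v i)) \<le> sqrt (sum u T * sum v T)"
    by (rule real_le_rsqrt)
  then show ?thesis by (simp add: real_sqrt_mult)
qed

lemma ell2_part_le_sqrt_max_mult_sum:
  assumes "\<forall>j. 0 \<le> x j" "\<forall>j\<in>I. x j \<le> M"
  shows "ell2_part I x \<le> sqrt M * sqrt (sum x I)"
proof -
  have "(\<Sum>j\<in>I. (x j)\<^sup>2) \<le> (\<Sum>j\<in>I. M * x j)"
    using assms by (intro sum_mono) (simp add: power2_eq_square mult_right_mono)
  then show ?thesis
    unfolding ell2_part_def by (simp add: sum_distrib_left real_sqrt_mult[symmetric])
qed

lemma spreading_pick_from_blocks:
  fixes t :: nat
  assumes spr: "spreading F" and mins: "(\<lambda>i. Min (I i)) ` {..<t} \<in> F"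
    and blocks: "\<And>i. i < t \<Longrightarrow> finite (I i) \<and> I i \<noteq> {}"
    and sep: "\<And>i j. i < j \<Longrightarrow> j < t \<Longrightarrow> Max (I i) < Min (I j)"
    and e: "\<And>i. i < t \<Longrightarrow> e i \<in> I i"
  shows "e ` {..<t} \<in> F"
proof -
  define mn where "mn i = Min (I i)" for i
  have e_bounds: "mn i \<le> e i" "e i \<le> Max (I i)" if "i < t" for i
    using blocks[OF that] e[OF that] unfolding mn_def by auto
  have mn_less: "mn i < mn j" if "i < j" "j < t" for i j
  proof -
    have "i < t" using that by linarith
    then have "Min (I i) \<le> Max (I i)" using blocks by (auto intro: Max_ge Min_in)
    then show ?thesis using sep[OF that] unfolding mn_def by simp
  qed
  have "strict_mono_on {..<t} mn" by (rule strict_mono_onI) (use mn_less in auto)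
  then have inj: "inj_on mn {..<t}" by (rule strict_mono_on_imp_inj_on)
  define g where "g = e \<circ> inv_into {..<t} mn"
  have g_mn: "g (mn i) = e i" if "i < t" for i
    unfolding g_def using inv_into_f_f[OF inj] that by simp
  have "strict_mono_on (mn ` {..<t}) g"
  proof (rule strict_mono_onI)
    fix m1 m2 assume "m1 \<in> mn ` {..<t}" "m2 \<in> mn ` {..<t}" "m1 < m2"
    then obtain i j where ij: "i < t" "j < t" "m1 = mn i" "m2 = mn j" by blast
    then have "i < j" using \<open>m1 < m2\<close> mn_less by (metis linorder_neqE_nat order.asym)
    then have "Max (I i) < Min (I j)" using sep ij(2) by blast
    then have "e i < e j" using e_bounds[OF ij(1)] e_bounds[OF ij(2)] unfolding mn_def by linarith
    then show "g m1 < g m2" using g_mn ij by simp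
  qed
  moreover have "\<forall>m\<in>mn ` {..<t}. m \<le> g m" using g_mn e_bounds by auto
  ultimately have "g ` mn ` {..<t} \<in> F"
    using spr mins unfolding spreading_def mn_def by blast
  moreover have "g ` mn ` {..<t} = e ` {..<t}" using g_mn by (auto simp: image_image)
  ultimately show ?thesis by simp
qed

lemma successive_blocks_disjoint:
  fixes t :: nat
  assumes blocks: "\<forall>i<t. I i \<noteq> {} \<and> finite (I i)"
    and sep: "\<forall>i j. i < j \<and> j < t \<longrightarrow> Max (I i) < Min (I j)"
    and "i < t" "j < t" "i \<noteq> j"
  shows "I i \<inter> I j = {}"
proof -
  have less: "I i \<inter> I j = {}" if "i < j" "j < t" for i j
  proof -
    have "i < t" using that by linarith
    then have "y \<le> Max (I i)" if "y \<in> I i" for y using blocks that by simp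
    moreover have "Min (I j) \<le> y" if "y \<in> I j" for y using blocks \<open>j < t\<close> that by simp
    ultimately show ?thesis using sep that by fastforce
  qed
  show ?thesis
  proof (cases "i < j")
    case False
    then have "j < i" using \<open>i \<noteq> j\<close> by simp
    then show ?thesis using less[of j i] \<open>i < t\<close> by blast
  qed (use less \<open>j < t\<close> in blast)
qed

lemma admissible_sum_le_sqrt:
  fixes t :: nat
  assumes spr: "spreading F" and nonneg: "\<forall>j. 0 \<le> x j"
    and "finite U" and support: "\<forall>j. j \<notin> U \<longrightarrow> x j = 0" and total: "sum x U \<le> 1"
    and mass: "\<forall>A\<in>F. sum x A \<le> c" and "0 \<le> c"
    and blocks: "\<forall>i<t. I i \<noteq> {} \<and> finite (I i)"
    and sep: "\<forall>i j. i < j \<and> j < t \<longrightarrow> Max (I i) < Min (I j)"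
    and mins: "(\<lambda>i. Min (I i)) ` {..<t} \<in> F"
  shows "(\<Sum>i<t. ell2_part (I i) x) \<le> sqrt c"
proof -
  define e where "e i = arg_min_on (\<lambda>j. - x j) (I i)" for i
  have e: "e i \<in> I i" "\<forall>j\<in>I i. x j \<le> x (e i)" if "i < t" for i
    using arg_min_if_finite(1)[of "I i" "\<lambda>j. - x j"] arg_min_least[of "I i" _ "\<lambda>j. - x j"]
      blocks that unfolding e_def by auto
  note disjoint = successive_blocks_disjoint[OF blocks sep]
  have inj: "inj_on e {..<t}"
    using e(1) disjoint unfolding inj_on_def by (metis disjoint_iff lessThan_iff)
  have "(\<Sum>i<t. ell2_part (I i) x) \<le> (\<Sum>i<t. sqrt (x (e i)) * sqrt (sum x (I i)))"
    using ell2_part_le_sqrt_max_mult_sum[OF nonneg] e(2) by (intro sum_mono) blast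
  also have "\<dots> \<le> sqrt (\<Sum>i<t. x (e i)) * sqrt (\<Sum>i<t. sum x (I i))"
    using nonneg by (intro sum_sqrt_mult_le) (auto intro: sum_nonneg)
  also have "\<dots> \<le> sqrt c * sqrt 1"
  proof (rule mult_mono)
    have "e ` {..<t} \<in> F"
      using spreading_pick_from_blocks[OF spr mins] blocks sep e(1) by blast
    then have "sum x (e ` {..<t}) \<le> c" using mass by blast
    then show "sqrt (\<Sum>i<t. x (e i)) \<le> sqrt c" using sum.reindex[OF inj, of x] by simp
    have "(\<Sum>i<t. sum x (I i)) = sum x (\<Union>i<t. I i)"
      using blocks disjoint by (intro sum.UNION_disjoint[symmetric]) auto
    also have "\<dots> = sum x ((\<Union>i<t. I i) \<inter> U)"
      using support blocks by (intro sum.mono_neutral_right) auto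
    also have "\<dots> \<le> sum x U" using nonneg \<open>finite U\<close> by (intro sum_mono2) auto
    finally show "sqrt (\<Sum>i<t. sum x (I i)) \<le> sqrt 1" using total by simp
  qed (use \<open>0 \<le> c\<close> nonneg in \<open>auto intro: sum_nonneg\<close>)
  finally show ?thesis by simp
qed

lemma block_norm_le_sqrt:
  assumes spr: "spreading F" and "{1} \<in> F" and "\<forall>j. 0 \<le> x j"
    and "finite U" and "\<forall>j. j \<notin> U \<longrightarrow> x j = 0" and "sum x U \<le> 1"
    and "\<forall>A\<in>F. sum x A \<le> c" and "0 \<le> c"
  shows "block_norm F x \<le> sqrt c"
  unfolding block_norm_def
proof (rule cSup_least, goal_cases nonempty bound)
  case nonempty
  have "(\<lambda>i. Min {1::nat}) ` {..<1::nat} = {1}" by auto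
  then have "(\<lambda>i. Min {1::nat}) ` {..<1::nat} \<in> F" using \<open>{1} \<in> F\<close> by simp
  then show ?case
    by (intro ex_in_conv[THEN iffD1] exI[of _ "\<Sum>i<(1::nat). ell2_part {1} x"] CollectI
        exI[of _ 1] exI[of _ "\<lambda>_. {1}"]) auto
next
  case (bound v)
  then obtain t :: nat and I where v: "v = (\<Sum>i<t. ell2_part (I i) x)"
    and I: "\<forall>i<t. I i \<noteq> {} \<and> finite (I i)" "\<forall>i j. i < j \<and> j < t \<longrightarrow> Max (I i) < Min (I j)"
      "(\<lambda>i. Min (I i)) ` {..<t} \<in> F"
    by blast
  show ?case unfolding v by (rule admissible_sum_le_sqrt[OF spr assms(3-8) I])
qed

lemma sum_average_unit_vec:
  fixes a :: "nat \<Rightarrow> real"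
  assumes "finite E" "finite A"
  shows "sum (\<lambda>j. \<Sum>i\<in>E. a i * unit_vec (k i) j) A = sum a {i \<in> E. k i \<in> A}"
proof -
  have "sum (\<lambda>j. \<Sum>i\<in>E. a i * unit_vec (k i) j) A = (\<Sum>i\<in>E. a i * (\<Sum>j\<in>A. unit_vec (k i) j))"
    by (simp add: sum.swap[of _ A] sum_distrib_left)
  also have "\<dots> = (\<Sum>i\<in>E. if k i \<in> A then a i else 0)"
    using assms(2) unfolding unit_vec_def by (intro sum.cong) auto
  finally show ?thesis using assms(1) by (simp add: sum.inter_filter)
qed

lemma block_norm_average_unit_vec_le:
  assumes "spreading F" "{1} \<in> F" "convex_weights E a" "0 \<le> c"
    and mass: "\<forall>A\<in>F. finite A \<longrightarrow> sum a {i \<in> E. k i \<in> A} \<le> c"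
  shows "block_norm F (\<lambda>j. \<Sum>i\<in>E. a i * unit_vec (k i) j) \<le> sqrt c"
proof (rule block_norm_le_sqrt[OF assms(1,2) _ finite_imageI[of E k]])
  let ?x = "\<lambda>j. \<Sum>i\<in>E. a i * unit_vec (k i) j"
  have E: "finite E" "\<forall>i\<in>E. 0 \<le> a i" "sum a E = 1"
    using assms(3) unfolding convex_weights_def by auto
  then show "finite E" "\<forall>j. 0 \<le> ?x j" by (auto simp: unit_vec_def intro: sum_nonneg)
  show "\<forall>j. j \<notin> k ` E \<longrightarrow> ?x j = 0"
  proof (intro allI impI)
    fix j assume "j \<notin> k ` E"
    then have "\<forall>i\<in>E. a i * unit_vec (k i) j = 0" unfolding unit_vec_def by auto
    then show "?x j = 0" by (rule sum.neutral)
  qed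
  have "sum ?x (k ` E) = sum a {i \<in> E. k i \<in> k ` E}"
    by (rule sum_average_unit_vec) (use E(1) in auto)
  also have "{i \<in> E. k i \<in> k ` E} = E" by blast
  finally show "sum ?x (k ` E) \<le> 1" using E(3) by simp
  show "\<forall>A\<in>F. sum ?x A \<le> c"
  proof
    fix A assume "A \<in> F"
    show "sum ?x A \<le> c"
    proof (cases "finite A")
      case True
      then show ?thesis using sum_average_unit_vec[OF E(1) True] mass \<open>A \<in> F\<close> by simp
    qed (use \<open>0 \<le> c\<close> in simp)
  qed
qed fact

lemma weighted_block_norm_average_unit_vec_le:
  fixes w d :: real
  assumes "spreading F" "{1} \<in> F" "convex_weights E a" "0 < w" "w \<le> 1" "0 \<le> d"
    and "w < d \<or> (\<forall>A\<in>F. finite A \<longrightarrow> sum a {i \<in> E. k i \<in> A} \<le> d\<^sup>2)"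
  shows "w * block_norm F (\<lambda>j. \<Sum>i\<in>E. a i * unit_vec (k i) j) \<le> d"
proof -
  let ?b = "block_norm F (\<lambda>j. \<Sum>i\<in>E. a i * unit_vec (k i) j)"
  have "sum a {i \<in> E. k i \<in> A} \<le> 1" for A
    using assms(3) sum_mono2[of E "{i \<in> E. k i \<in> A}" a] unfolding convex_weights_def by force
  then have "?b \<le> sqrt 1" by (intro block_norm_average_unit_vec_le[OF assms(1-3)]) auto
  then have "w * ?b \<le> w" using mult_left_mono[of ?b 1 w] \<open>0 < w\<close> by simp
  moreover have "w * ?b \<le> d" if "\<forall>A\<in>F. finite A \<longrightarrow> sum a {i \<in> E. k i \<in> A} \<le> d\<^sup>2"
  proof -
    have "?b \<le> sqrt (d\<^sup>2)" by (rule block_norm_average_unit_vec_le[OF assms(1-3) _ that]) simp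
    then have "?b \<le> d" using \<open>0 \<le> d\<close> by simp
    then show ?thesis
      using \<open>0 < w\<close> \<open>w \<le> 1\<close> \<open>0 \<le> d\<close> mult_left_le_one_le[of ?b w] mult_pos_neg[of w ?b]
      by (cases "0 \<le> ?b") auto
  qed
  ultimately show ?thesis using assms(7) by linarith
qed

lemma hereditary_ranked_preimage:
  assumes "inj_on k D" "hereditary F" "ranked s F \<rho>"
  shows "hereditary {B. B \<subseteq> D \<and> k ` B \<in> F}" "ranked s {B. B \<subseteq> D \<and> k ` B \<in> F} (\<lambda>B. \<rho> (k ` B))"
proof -
  show "hereditary {B. B \<subseteq> D \<and> k ` B \<in> F}"
    using assms(2) unfolding hereditary_def by (blast dest: image_mono)
  have image_psubset: "k ` B \<subset> k ` B'" if "B \<subset> B'" "B' \<subseteq> D" for B B'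
  proof -
    have "k ` B \<noteq> k ` B'" using inj_on_image_eq_iff[OF assms(1)] that by blast
    then show ?thesis using that by blast
  qed
  show "ranked s {B. B \<subseteq> D \<and> k ` B \<in> F} (\<lambda>B. \<rho> (k ` B))"
    unfolding ranked_def
  proof (intro ballI impI)
    fix B B' assume "B \<in> {B. B \<subseteq> D \<and> k ` B \<in> F}" "B' \<in> {B. B \<subseteq> D \<and> k ` B \<in> F}" "B \<subset> B'"
    then have "k ` B \<in> F" "k ` B' \<in> F" "k ` B \<subset> k ` B'" using image_psubset by simp_all
    then show "omega_pow_less s (\<rho> (k ` B')) (\<rho> (k ` B))"
      using assms(3) unfolding ranked_def by blast
  qed
qed

lemma exists_small_average_unit_vec:
  fixes \<eta> :: "nat rel" and F :: "nat \<Rightarrow> nat set set" and \<omega> :: "nat \<Rightarrow> real" and k :: "nat \<Rightarrow> nat"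
  assumes small: "small_averages S \<eta>" and "Well_order \<eta>"
    and F: "\<And>n. 1 \<le> n \<Longrightarrow> hereditary (F n) \<and> spreading (F n) \<and> {1} \<in> F n \<and> (\<exists>\<rho>. ranked \<eta> (F n) \<rho>)"
    and \<omega>: "\<And>n. 1 \<le> n \<Longrightarrow> 0 < \<omega> n \<and> \<omega> n \<le> 1" and "\<omega> \<longlonglongrightarrow> 0"
    and k: "inj_on k {1..}" and "0 < \<delta>"
  obtains E a where "E \<in> S \<eta>" "convex_weights E a"
    "bracket_norm F \<omega> (\<lambda>j. \<Sum>i\<in>E. a i * unit_vec (k i) j) < \<delta>"
proof -
  obtain N where N: "\<And>n. N \<le> n \<Longrightarrow> \<omega> n < \<delta> / 2"
    using order_tendstoD(2)[OF \<open>\<omega> \<longlonglongrightarrow> 0\<close>, of "\<delta> / 2"] \<open>0 < \<delta>\<close>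
    unfolding eventually_sequentially by auto
  define G where "G n = {B. B \<subseteq> {1..} \<and> k ` B \<in> F n}" for n
  have G: "\<forall>H\<in>G ` {1..N}. hereditary H \<and> (\<exists>\<rho>. ranked \<eta> H \<rho>)"
    using hereditary_ranked_preimage[OF k] F unfolding G_def by fastforce
  obtain E a where E: "E \<in> S \<eta>" "E \<subseteq> {0<..}" "convex_weights E a"
    and mass: "\<forall>H\<in>G ` {1..N}. \<forall>B\<in>H. B \<subseteq> E \<longrightarrow> sum a B < (\<delta> / 2)\<^sup>2"
    using small_averagesD[OF small ordLeq_reflexive[OF \<open>Well_order \<eta>\<close>] finite_imageI[OF finite_atLeastAtMost]
        _ G, where \<epsilon> = "(\<delta> / 2)\<^sup>2" and m = 0] \<open>0 < \<delta>\<close> by auto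
  have "\<omega> n * block_norm (F n) (\<lambda>j. \<Sum>i\<in>E. a i * unit_vec (k i) j) \<le> \<delta> / 2" if "1 \<le> n" for n
  proof (rule weighted_block_norm_average_unit_vec_le)
    show "spreading (F n)" "{1} \<in> F n" "0 < \<omega> n" "\<omega> n \<le> 1" using F[OF that] \<omega>[OF that] by auto
    have "sum a {i \<in> E. k i \<in> A} \<le> (\<delta> / 2)\<^sup>2" if "n \<le> N" "A \<in> F n" for A
    proof -
      have "k ` {i \<in> E. k i \<in> A} \<subseteq> A" by blast
      then have "k ` {i \<in> E. k i \<in> A} \<in> F n"
        using F[OF \<open>1 \<le> n\<close>] \<open>A \<in> F n\<close> unfolding hereditary_def by blast
      then have "{i \<in> E. k i \<in> A} \<in> G n" using E(2) unfolding G_def by auto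
      then show ?thesis using mass \<open>1 \<le> n\<close> \<open>n \<le> N\<close> by fastforce
    qed
    then show "\<omega> n < \<delta> / 2 \<or> (\<forall>A\<in>F n. finite A \<longrightarrow> sum a {i \<in> E. k i \<in> A} \<le> (\<delta> / 2)\<^sup>2)"
      using N by (cases "n \<le> N") auto
  qed (use E(3) \<open>0 < \<delta>\<close> in auto)
  then have "bracket_norm F \<omega> (\<lambda>j. \<Sum>i\<in>E. a i * unit_vec (k i) j) \<le> \<delta> / 2"
    unfolding bracket_norm_def by (intro cSUP_least) auto
  then show thesis using that[OF E(1,3)] \<open>0 < \<delta>\<close> by simp
qed

theorem lemma3p1:
  fixes \<eta> :: "nat rel" and F :: "nat \<Rightarrow> nat set set" and \<omega> :: "nat \<Rightarrow> real"
    and S :: "nat rel \<Rightarrow> nat set set"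
  assumes "Well_order \<eta>" and "Field \<eta> \<noteq> {}"
    and "\<forall>n\<ge>1. regular (F n) \<and> contains_singletons (F n) \<and> CB_less (F n) (omega_pow \<eta>)"
    and "\<forall>n\<ge>1. 0 < \<omega> n \<and> \<omega> n \<le> 1"
    and "\<omega> \<longlonglongrightarrow> 0"
    and "schreier_system S"
  shows "weakly_null_wrt (S \<eta>) (bracket_norm F \<omega>) unit_vec"
proof -
  have F: "hereditary (F n) \<and> spreading (F n) \<and> {1} \<in> F n \<and> (\<exists>\<rho>. ranked \<eta> (F n) \<rho>)"
    if "1 \<le> n" for n
    using assms(3) that CB_less_imp_ranked unfolding regular_def contains_singletons_def by blast
  have small: "small_averages S \<eta>" using small_averages_schreier_system[OF assms(6,1)] .
  show ?thesis
    unfolding weakly_null_wrt_def l1_spreading_model_def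
  proof (intro notI, elim exE conjE)
    fix k :: "nat \<Rightarrow> nat" and \<delta> :: real
    assume "strict_mono_on {1..} k" "0 < \<delta>"
      and l1: "\<forall>E\<in>S \<eta>. \<forall>a. (\<forall>i\<in>E. 0 \<le> a i) \<and> sum a E = 1 \<longrightarrow>
        \<delta> \<le> bracket_norm F \<omega> (\<lambda>j. \<Sum>i\<in>E. a i * unit_vec (k i) j)"
    obtain E a where "E \<in> S \<eta>" "convex_weights E a"
      "bracket_norm F \<omega> (\<lambda>j. \<Sum>i\<in>E. a i * unit_vec (k i) j) < \<delta>"
      using exists_small_average_unit_vec[where F = F and \<omega> = \<omega> and k = k, OF small assms(1) F _ assms(5)
          strict_mono_on_imp_inj_on[OF \<open>strict_mono_on {1..} k\<close>] \<open>0 < \<delta>\<close>] assms(4)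
      by blast
    then show False using l1 unfolding convex_weights_def by fastforce
  qed
qed

end
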